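(* Let $G$ be a torsion-free hyperbolic group and $\mathcal{H}$ a peripheral structure of $G$. Let $T_1$ and $T_2$ be two metric $G$-trees such that, in each of them, the elliptic subgroups are exactly the subgroups of $G$ contained in conjugates of groups of $\mathcal{H}$. Then for any automorphism $\alpha$ of $G$ preserving $\mathcal{H}$ (sending each group in $\mathcal{H}$ to a conjugate of a group of the same conjugacy class), an element $g\in G$ has polynomial $\|\cdot\|_{T_1}$-growth under $\alpha$ if and only if it has polynomial $\|\cdot\|_{T_2}$-growth under $\alpha$.
   Context: A peripheral structure is a finite tuple of conjugacy classes of subgroups of $G$. A metric $G$-tree is a metric simplicial tree with an isometric $G$-action. For such a tree $T$ and $g\in G$, $\|g\|_T=\min_v d_T(v,gv)$, the minimum over vertices $v$ of $T$. An element $g$ has polynomial $\|\cdot\|_T$-growth under $\alpha$ if there is a polynomial $P\in\mathbb{Z}[X]$ with $\|\alpha^n(g)\|_T\le P(n)$ for all $n$. *)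

theory Defs
  imports "HOL-Algebra.Generated_Groups" "HOL-Computational_Algebra.Polynomial"
begin

definition finite_gen_set :: "('g, 'b) monoid_scheme \<Rightarrow> 'g set \<Rightarrow> bool" where
  "finite_gen_set G S \<longleftrightarrow> finite S \<and> S \<subseteq> carrier G \<and> generate G S = carrier G"

definition word_length :: "('g, 'b) monoid_scheme \<Rightarrow> 'g set \<Rightarrow> 'g \<Rightarrow> nat" where
  "word_length G S g = (LEAST n. \<exists>ws. length ws = n \<and> set ws \<subseteq> S \<union> (\<lambda>s. inv\<^bsub>G\<^esub> s) ` S
       \<and> foldr (\<lambda>a b. a \<otimes>\<^bsub>G\<^esub> b) ws \<one>\<^bsub>G\<^esub> = g)"

definition word_dist :: "('g, 'b) monoid_scheme \<Rightarrow> 'g set \<Rightarrow> 'g \<Rightarrow> 'g \<Rightarrow> real" where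
  "word_dist G S x y = real (word_length G S (inv\<^bsub>G\<^esub> x \<otimes>\<^bsub>G\<^esub> y))"

definition gromov_product :: "('g, 'b) monoid_scheme \<Rightarrow> 'g set \<Rightarrow> 'g \<Rightarrow> 'g \<Rightarrow> 'g \<Rightarrow> real" where
  "gromov_product G S x y w =
     (word_dist G S w x + word_dist G S w y - word_dist G S x y) / 2"

definition hyperbolic_group :: "('g, 'b) monoid_scheme \<Rightarrow> bool" where
  "hyperbolic_group G \<longleftrightarrow> group G \<and>
     (\<exists>S. finite_gen_set G S \<and> (\<exists>\<delta>\<ge>0. \<forall>x\<in>carrier G. \<forall>y\<in>carrier G. \<forall>z\<in>carrier G. \<forall>w\<in>carrier G.
        gromov_product G S x z w \<ge> min (gromov_product G S x y w) (gromov_product G S y z w) - \<delta>))"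

definition torsion_free :: "('g, 'b) monoid_scheme \<Rightarrow> bool" where
  "torsion_free G \<longleftrightarrow> (\<forall>g\<in>carrier G. g \<noteq> \<one>\<^bsub>G\<^esub> \<longrightarrow> (\<forall>n::nat. n > 0 \<longrightarrow> g [^]\<^bsub>G\<^esub> n \<noteq> \<one>\<^bsub>G\<^esub>))"

definition conjugate :: "('g, 'b) monoid_scheme \<Rightarrow> 'g \<Rightarrow> 'g set \<Rightarrow> 'g set" where
  "conjugate G x H = {x \<otimes>\<^bsub>G\<^esub> h \<otimes>\<^bsub>G\<^esub> inv\<^bsub>G\<^esub> x | h. h \<in> H}"

text \<open>A peripheral structure: a finite tuple of conjugacy classes of subgroups,
  given by a list of representatives.\<close>
definition peripheral_structure :: "('g, 'b) monoid_scheme \<Rightarrow> 'g set list \<Rightarrow> bool" where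
  "peripheral_structure G Hs \<longleftrightarrow> (\<forall>H\<in>set Hs. subgroup H G)"

definition preserves_peripheral :: "('g, 'b) monoid_scheme \<Rightarrow> 'g set list \<Rightarrow> ('g \<Rightarrow> 'g) \<Rightarrow> bool" where
  "preserves_peripheral G Hs \<alpha> \<longleftrightarrow>
     (\<forall>i<length Hs. \<exists>x\<in>carrier G. \<alpha> ` (Hs ! i) = conjugate G x (Hs ! i))"

fun is_walk :: "('v \<Rightarrow> 'v \<Rightarrow> bool) \<Rightarrow> 'v list \<Rightarrow> bool" where
  "is_walk E [] = False"
| "is_walk E [v] = True"
| "is_walk E (u # v # vs) = (E u v \<and> is_walk E (v # vs))"

fun walk_weight :: "('v \<Rightarrow> 'v \<Rightarrow> real) \<Rightarrow> 'v list \<Rightarrow> real" where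
  "walk_weight len [] = 0"
| "walk_weight len [v] = 0"
| "walk_weight len (u # v # vs) = len u v + walk_weight len (v # vs)"

definition simplicial_tree :: "'v set \<Rightarrow> ('v \<Rightarrow> 'v \<Rightarrow> bool) \<Rightarrow> bool" where
  "simplicial_tree V E \<longleftrightarrow> V \<noteq> {} \<and>
     (\<forall>u v. E u v \<longrightarrow> u \<in> V \<and> v \<in> V \<and> E v u \<and> u \<noteq> v) \<and>
     (\<forall>u\<in>V. \<forall>v\<in>V. \<exists>p. is_walk E p \<and> hd p = u \<and> last p = v) \<and>
     (\<nexists>c. distinct c \<and> length c \<ge> 3 \<and> is_walk E (c @ [hd c]))"

definition metric_simplicial_tree :: "'v set \<Rightarrow> ('v \<Rightarrow> 'v \<Rightarrow> bool) \<Rightarrow> ('v \<Rightarrow> 'v \<Rightarrow> real) \<Rightarrow> bool" where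
  "metric_simplicial_tree V E len \<longleftrightarrow> simplicial_tree V E \<and>
     (\<forall>u v. E u v \<longrightarrow> len u v > 0 \<and> len u v = len v u)"

definition tree_dist :: "('v \<Rightarrow> 'v \<Rightarrow> bool) \<Rightarrow> ('v \<Rightarrow> 'v \<Rightarrow> real) \<Rightarrow> 'v \<Rightarrow> 'v \<Rightarrow> real" where
  "tree_dist E len u v = Inf {walk_weight len p | p. is_walk E p \<and> hd p = u \<and> last p = v}"

definition metric_G_tree :: "('g, 'b) monoid_scheme \<Rightarrow> 'v set \<Rightarrow> ('v \<Rightarrow> 'v \<Rightarrow> bool)
    \<Rightarrow> ('v \<Rightarrow> 'v \<Rightarrow> real) \<Rightarrow> ('g \<Rightarrow> 'v \<Rightarrow> 'v) \<Rightarrow> bool" where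
  "metric_G_tree G V E len \<phi> \<longleftrightarrow> metric_simplicial_tree V E len \<and>
     (\<forall>g\<in>carrier G. bij_betw (\<phi> g) V V \<and>
        (\<forall>u\<in>V. \<forall>v\<in>V. E (\<phi> g u) (\<phi> g v) \<longleftrightarrow> E u v) \<and>
        (\<forall>u v. E u v \<longrightarrow> len (\<phi> g u) (\<phi> g v) = len u v)) \<and>
     (\<forall>v\<in>V. \<phi> \<one>\<^bsub>G\<^esub> v = v) \<and>
     (\<forall>g\<in>carrier G. \<forall>h\<in>carrier G. \<forall>v\<in>V. \<phi> (g \<otimes>\<^bsub>G\<^esub> h) v = \<phi> g (\<phi> h v))"

text \<open>A subgroup is elliptic if it fixes a point of the (geometric realisation of the)
  tree: either a vertex, or the midpoint of an edge, i.e. it leaves an edge invariant.\<close>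
definition elliptic :: "'v set \<Rightarrow> ('v \<Rightarrow> 'v \<Rightarrow> bool) \<Rightarrow> ('g \<Rightarrow> 'v \<Rightarrow> 'v) \<Rightarrow> 'g set \<Rightarrow> bool" where
  "elliptic V E \<phi> K \<longleftrightarrow>
     (\<exists>v\<in>V. \<forall>k\<in>K. \<phi> k v = v) \<or>
     (\<exists>u v. E u v \<and> (\<forall>k\<in>K. \<phi> k ` {u, v} = {u, v}))"

definition trans_length :: "'v set \<Rightarrow> ('v \<Rightarrow> 'v \<Rightarrow> bool) \<Rightarrow> ('v \<Rightarrow> 'v \<Rightarrow> real)
    \<Rightarrow> ('g \<Rightarrow> 'v \<Rightarrow> 'v) \<Rightarrow> 'g \<Rightarrow> real" where
  "trans_length V E len \<phi> g = (INF v\<in>V. tree_dist E len v (\<phi> g v))"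

definition polynomial_growth :: "'v set \<Rightarrow> ('v \<Rightarrow> 'v \<Rightarrow> bool) \<Rightarrow> ('v \<Rightarrow> 'v \<Rightarrow> real)
    \<Rightarrow> ('g \<Rightarrow> 'v \<Rightarrow> 'v) \<Rightarrow> ('g \<Rightarrow> 'g) \<Rightarrow> 'g \<Rightarrow> bool" where
  "polynomial_growth V E len \<phi> \<alpha> g \<longleftrightarrow>
     (\<exists>P :: int poly. \<forall>n::nat. trans_length V E len \<phi> ((\<alpha> ^^ n) g) \<le> of_int (poly P (int n)))"

end

(*
  Translation lengths in the two trees are comparable: there are C > 0 and M with
  ||h||_T2 <= C ||h||_T1 + M for all h in G, and symmetrically, so a polynomial bound on
  ||alpha^n(g)|| in one tree yields one in the other.

  If h is elliptic in T2, it lies in a conjugate of a peripheral subgroup, and these finitely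
  many subgroups have uniformly bounded displacement on T2.  Otherwise h has an axis in T2,
  along which h^n moves points by n times the displacement of h.  Since G is finitely generated
  and vertex stabilisers of T1 are elliptic in T2, the orbit map y v0 -> y w0 from T1 to T2 is
  coarsely Lipschitz, and comparing the linear growth of the displacement of h^n in both trees
  gives ||h||_T2 <= C ||h||_T1.
*)
theory Submission
  imports Defs
begin

section \<open>Walks in graphs\<close>

fun backtrack_free :: "'v list \<Rightarrow> bool" where
  "backtrack_free (a # b # c # xs) \<longleftrightarrow> a \<noteq> c \<and> backtrack_free (b # c # xs)"
| "backtrack_free _ \<longleftrightarrow> True"

fun walk_edges :: "'v list \<Rightarrow> ('v \<times> 'v) set" where
  "walk_edges (a # b # xs) = insert (a, b) (walk_edges (b # xs))"
| "walk_edges _ = {}"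

lemma is_walk_ConsD: "is_walk E (x # xs) \<Longrightarrow> xs \<noteq> [] \<Longrightarrow> is_walk E xs"
  by (cases xs) auto

lemma is_walk_append:
  "is_walk E (xs @ x # ys) \<longleftrightarrow> is_walk E (xs @ [x]) \<and> is_walk E (x # ys)"
  by (induction xs rule: walk_edges.induct) auto

lemma walk_weight_append:
  "walk_weight len (xs @ x # ys) = walk_weight len (xs @ [x]) + walk_weight len (x # ys)"
  by (induction xs rule: walk_edges.induct) auto

lemma walk_edges_append: "walk_edges (xs @ x # ys) = walk_edges (xs @ [x]) \<union> walk_edges (x # ys)"
  by (induction xs rule: walk_edges.induct) auto

lemma finite_walk_edges: "finite (walk_edges p)"
  by (induction p rule: walk_edges.induct) auto

lemma walk_edges_map: "walk_edges (map f p) = (\<lambda>(x, y). (f x, f y)) ` walk_edges p"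
  by (induction p rule: walk_edges.induct) auto

lemma walk_edges_rev: "walk_edges (rev p) = (walk_edges p)\<inverse>"
proof (induction p rule: walk_edges.induct)
  case (1 a b xs)
  have "walk_edges (rev (a # b # xs)) = walk_edges (rev xs @ [b]) \<union> walk_edges [b, a]"
    using walk_edges_append[of "rev xs" b "[a]"] by simp
  then show ?case using 1 by auto
qed auto

lemma is_walk_edge: "is_walk E p \<Longrightarrow> (x, y) \<in> walk_edges p \<Longrightarrow> E x y"
  by (induction p rule: walk_edges.induct) auto

lemma is_walk_conv_nth: "is_walk E p \<longleftrightarrow> p \<noteq> [] \<and> (\<forall>i. Suc i < length p \<longrightarrow> E (p ! i) (p ! Suc i))"
proof (induction p rule: walk_edges.induct)
  case (1 a b xs)
  have "(\<forall>i. Suc i < length (a # b # xs) \<longrightarrow> E ((a # b # xs) ! i) ((a # b # xs) ! Suc i)) \<longleftrightarrow>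
        E a b \<and> (\<forall>i. Suc i < length (b # xs) \<longrightarrow> E ((b # xs) ! i) ((b # xs) ! Suc i))"
    by (auto simp: All_less_Suc2)
  with 1 show ?case by simp
qed auto

lemma is_walk_nth: "is_walk E p \<Longrightarrow> Suc i < length p \<Longrightarrow> E (p ! i) (p ! Suc i)"
  by (simp add: is_walk_conv_nth)

lemma is_walk_take: "is_walk E p \<Longrightarrow> 0 < n \<Longrightarrow> is_walk E (take n p)"
  by (simp add: is_walk_conv_nth)

lemma is_walk_drop: "is_walk E p \<Longrightarrow> n < length p \<Longrightarrow> is_walk E (drop n p)"
  by (simp add: is_walk_conv_nth)

lemma is_walk_map: "is_walk E p \<Longrightarrow> (\<And>u v. E u v \<Longrightarrow> E' (f u) (f v)) \<Longrightarrow> is_walk E' (map f p)"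
  by (induction p rule: walk_edges.induct) auto

lemma is_walk_rev:
  assumes "\<And>u v. E u v \<Longrightarrow> E v u"
  shows "is_walk E p \<Longrightarrow> is_walk E (rev p)"
proof (induction p rule: walk_edges.induct)
  case (1 a b xs)
  then show ?case using is_walk_append[of E "rev xs" b "[a]"] assms by simp
qed auto

lemma walk_weight_map:
  "is_walk E p \<Longrightarrow> (\<And>u v. E u v \<Longrightarrow> len' (f u) (f v) = len u v) \<Longrightarrow>
   walk_weight len' (map f p) = walk_weight len p"
  by (induction p rule: walk_edges.induct) auto

lemma walk_weight_rev:
  assumes "\<And>u v. E u v \<Longrightarrow> len u v = len v u"
  shows "is_walk E p \<Longrightarrow> walk_weight len (rev p) = walk_weight len p"
proof (induction p rule: walk_edges.induct)
  case (1 a b xs)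
  have "walk_weight len (rev (a # b # xs)) = walk_weight len (rev xs @ [b]) + len b a"
    using walk_weight_append[of len "rev xs" b "[a]"] by simp
  also have "\<dots> = walk_weight len (b # xs) + len a b" using 1 assms[of a b] by simp
  finally show ?case by simp
qed auto

lemma walk_weight_ge_card_mult:
  "is_walk E p \<Longrightarrow> (\<And>x y. (x, y) \<in> walk_edges p \<Longrightarrow> l \<le> len x y) \<Longrightarrow>
   real (length p - 1) * l \<le> walk_weight len p"
proof (induction p rule: walk_edges.induct)
  case (1 a b xs)
  have "real (length (b # xs) - 1) * l \<le> walk_weight len (b # xs)" using 1 by auto
  moreover have "l \<le> len a b" using 1 by auto
  ultimately show ?case by (simp add: algebra_simps)
qed auto

lemma backtrack_free_conv_nth:
  "backtrack_free p \<longleftrightarrow> (\<forall>i. Suc (Suc i) < length p \<longrightarrow> p ! i \<noteq> p ! Suc (Suc i))"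
proof (induction p rule: backtrack_free.induct)
  case (1 a b c xs)
  have "(\<forall>i. Suc (Suc i) < length (a # b # c # xs) \<longrightarrow> (a # b # c # xs) ! i \<noteq> (a # b # c # xs) ! Suc (Suc i))
     \<longleftrightarrow> a \<noteq> c \<and> (\<forall>i. Suc (Suc i) < length (b # c # xs) \<longrightarrow> (b # c # xs) ! i \<noteq> (b # c # xs) ! Suc (Suc i))"
    by (auto simp: All_less_Suc2)
  with 1 show ?case by simp
qed auto

lemma backtrack_free_ConsD: "backtrack_free (x # xs) \<Longrightarrow> backtrack_free xs"
  by (induction xs rule: backtrack_free.induct) auto

lemma backtrack_free_take: "backtrack_free p \<Longrightarrow> backtrack_free (take n p)"
  by (simp add: backtrack_free_conv_nth)

lemma backtrack_free_drop: "backtrack_free p \<Longrightarrow> backtrack_free (drop n p)"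
  by (simp add: backtrack_free_conv_nth)

lemma backtrack_free_map: "backtrack_free p \<Longrightarrow> inj_on f (set p) \<Longrightarrow> backtrack_free (map f p)"
  by (simp add: backtrack_free_conv_nth inj_on_eq_iff)

lemma backtrack_free_rev: "backtrack_free p \<Longrightarrow> backtrack_free (rev p)"
  unfolding backtrack_free_conv_nth
proof (intro allI impI)
  fix i assume bf: "\<forall>i. Suc (Suc i) < length p \<longrightarrow> p ! i \<noteq> p ! Suc (Suc i)"
    and i: "Suc (Suc i) < length (rev p)"
  let ?j = "length p - Suc (Suc (Suc i))"
  have "p ! ?j \<noteq> p ! Suc (Suc ?j)" using bf i by auto
  moreover have "rev p ! i = p ! Suc (Suc ?j)" "rev p ! Suc (Suc i) = p ! ?j"
    using i by (simp_all add: rev_nth Suc_diff_Suc)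
  ultimately show "rev p ! i \<noteq> rev p ! Suc (Suc i)" by simp
qed

lemma backtrack_free_join:
  "backtrack_free (xs @ [a, b]) \<Longrightarrow> backtrack_free (b # c # ys) \<Longrightarrow> a \<noteq> c \<Longrightarrow>
   backtrack_free (xs @ a # b # c # ys)"
  by (induction xs rule: backtrack_free.induct) (auto split: if_splits)

lemma not_backtrack_free_split: "\<not> backtrack_free p \<Longrightarrow> \<exists>xs a b ys. p = xs @ a # b # a # ys"
proof (induction p rule: backtrack_free.induct)
  case (1 a b c xs)
  show ?case
  proof (cases "a = c")
    case True then show ?thesis by (metis append_Nil)
  next
    case False
    with 1 obtain xs' a' b' ys where "b # c # xs = xs' @ a' # b' # a' # ys" by auto
    then have "a # b # c # xs = (a # xs') @ a' # b' # a' # ys" by simp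
    then show ?thesis by blast
  qed
qed auto

section \<open>Trees and their path metric\<close>

locale combinatorial_tree =
  fixes V :: "'v set" and E :: "'v \<Rightarrow> 'v \<Rightarrow> bool"
  assumes simplicial_tree: "simplicial_tree V E"
begin

lemma edge_in_V: "E u v \<Longrightarrow> u \<in> V \<and> v \<in> V"
  and edge_sym: "E u v \<Longrightarrow> E v u"
  and edge_irrefl: "E u v \<Longrightarrow> u \<noteq> v"
  using simplicial_tree unfolding simplicial_tree_def by auto

lemma V_nonempty: "V \<noteq> {}"
  using simplicial_tree unfolding simplicial_tree_def by simp

lemma walk_exists: "u \<in> V \<Longrightarrow> v \<in> V \<Longrightarrow> \<exists>p. is_walk E p \<and> hd p = u \<and> last p = v"
  using simplicial_tree unfolding simplicial_tree_def by simp

lemma no_cycle: "distinct c \<Longrightarrow> 3 \<le> length c \<Longrightarrow> \<not> is_walk E (c @ [hd c])"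
  using simplicial_tree unfolding simplicial_tree_def by auto

lemma walk_in_V: "is_walk E p \<Longrightarrow> hd p \<in> V \<Longrightarrow> set p \<subseteq> V"
  by (induction p rule: walk_edges.induct) (auto dest: edge_in_V)

lemma backtrack_free_walk_distinct: "is_walk E p \<Longrightarrow> backtrack_free p \<Longrightarrow> distinct p"
proof (induction p)
  case (Cons x w)
  show ?case
  proof (cases "w = []")
    case False
    have dw: "distinct w"
      using Cons.IH is_walk_ConsD[OF Cons.prems(1) False] backtrack_free_ConsD[OF Cons.prems(2)]
      by blast
    have "x \<notin> set w"
    proof
      assume "x \<in> set w"
      then obtain j where j: "j < length w" "w ! j = x" by (metis in_set_conv_nth)
      have "E x (w ! 0)" using is_walk_nth[OF Cons.prems(1), of 0] False by simp
      then have "j \<noteq> 0" using j edge_irrefl[of x "w ! 0"] by (metis)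
      moreover have "j \<noteq> 1"
        using Cons.prems(2) j by (auto simp: backtrack_free_conv_nth[of "x # w"] dest: spec[of _ 0])
      ultimately have "2 \<le> j" by linarith
      define c where "c = x # take j w"
      have "x \<notin> set (take j w)"
        using dw j by (auto simp: in_set_conv_nth nth_eq_iff_index_eq)
      then have "distinct c" using dw c_def by simp
      moreover have "3 \<le> length c" using \<open>2 \<le> j\<close> j c_def by simp
      moreover have "c @ [hd c] = take (Suc (Suc j)) (x # w)"
        using j c_def by (simp add: take_Suc_conv_app_nth)
      then have "is_walk E (c @ [hd c])" using is_walk_take[OF Cons.prems(1), of "Suc (Suc j)"] by simp
      ultimately show False using no_cycle by blast
    qed
    then show ?thesis using dw by simp
  qed simp
qed simp

lemma backtrack_free_walk_hd_neq_last:
  assumes "is_walk E p" "backtrack_free p" "2 \<le> length p"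
  shows "hd p \<noteq> last p"
proof -
  obtain u q where "p = u # q" "q \<noteq> []" using assms(3) by (cases p) force+
  then show ?thesis using backtrack_free_walk_distinct[OF assms(1,2)] last_in_set[of q] by auto
qed

lemma backtrack_free_walks_diverge:
  assumes "is_walk E (u # x # xs)" "backtrack_free (u # x # xs)"
    and "is_walk E (u # y # ys)" "backtrack_free (u # y # ys)" and "x \<noteq> y"
  shows "last (x # xs) \<noteq> last (y # ys)"
proof -
  \<comment> \<open>going back along the first walk and out along the second one does not backtrack at \<open>u\<close>\<close>
  define W where "W = rev xs @ x # u # y # ys"
  have "backtrack_free (rev xs @ [x, u])"
    using backtrack_free_rev[OF assms(2)] by simp
  then have "backtrack_free W" unfolding W_def by (rule backtrack_free_join[OF _ assms(4,5)])
  moreover have "is_walk E W"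
  proof -
    have "is_walk E ((rev xs @ [x]) @ [u])" using is_walk_rev[OF edge_sym assms(1)] by simp
    then show ?thesis
      unfolding W_def using assms(3) is_walk_append[of E "rev xs @ [x]" u "y # ys"] by simp
  qed
  moreover have "hd W = last (x # xs)"
    unfolding W_def by (cases xs rule: rev_cases) auto
  moreover have "last W = last (y # ys)" "2 \<le> length W"
    unfolding W_def by simp_all
  ultimately show ?thesis using backtrack_free_walk_hd_neq_last[of W] by simp
qed

lemma backtrack_free_walk_unique:
  "is_walk E p \<Longrightarrow> backtrack_free p \<Longrightarrow> is_walk E p' \<Longrightarrow> backtrack_free p' \<Longrightarrow>
   hd p = hd p' \<Longrightarrow> last p = last p' \<Longrightarrow> p = p'"
proof (induction p arbitrary: p' rule: walk_edges.induct)
  case (1 u x xs)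
  obtain ys' where p': "p' = u # ys'" using "1.prems"(3,5) by (cases p') auto
  show ?case
  proof (cases ys')
    case Nil
    then show ?thesis using backtrack_free_walk_hd_neq_last[of "u # x # xs"] "1.prems" p' by simp
  next
    case (Cons y ys)
    show ?thesis
    proof (cases "x = y")
      case True
      have "x # xs = y # ys"
      proof (rule "1.IH")
        show "is_walk E (x # xs)" "backtrack_free (x # xs)"
          using "1.prems"(1,2) by (auto dest: backtrack_free_ConsD)
        show "is_walk E (y # ys)" "backtrack_free (y # ys)"
          using "1.prems"(3,4) unfolding p' Cons by (auto dest: backtrack_free_ConsD)
        show "hd (x # xs) = hd (y # ys)" "last (x # xs) = last (y # ys)"
          using True "1.prems"(6) unfolding p' Cons by simp_all
      qed
      then show ?thesis unfolding p' Cons by simp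
    next
      case False
      then show ?thesis
        using backtrack_free_walks_diverge[of u x xs y ys] "1.prems" unfolding p' Cons by simp
    qed
  qed
next
  case ("2_2" v)
  then show ?case
    using backtrack_free_walk_hd_neq_last[of p'] by (cases p' rule: walk_edges.cases) auto
qed simp

end

locale metric_tree =
  fixes V :: "'v set" and E :: "'v \<Rightarrow> 'v \<Rightarrow> bool" and len :: "'v \<Rightarrow> 'v \<Rightarrow> real"
  assumes metric_simplicial_tree: "metric_simplicial_tree V E len"
begin

sublocale combinatorial_tree V E
  using metric_simplicial_tree unfolding metric_simplicial_tree_def by unfold_locales simp

abbreviation d where "d \<equiv> tree_dist E len"

lemma len_pos: "E u v \<Longrightarrow> 0 < len u v"
  and len_sym: "E u v \<Longrightarrow> len u v = len v u"
  using metric_simplicial_tree unfolding metric_simplicial_tree_def by auto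

lemma walk_weight_nonneg: "is_walk E p \<Longrightarrow> 0 \<le> walk_weight len p"
  by (induction p rule: walk_edges.induct) (auto intro: add_nonneg_nonneg less_imp_le len_pos)

lemma reduce_walk:
  "is_walk E p \<Longrightarrow> \<exists>q. is_walk E q \<and> backtrack_free q \<and> hd q = hd p \<and> last q = last p \<and>
     walk_weight len q \<le> walk_weight len p \<and> walk_edges q \<subseteq> walk_edges p"
proof (induction "length p" arbitrary: p rule: less_induct)
  case less
  show ?case
  proof (cases "backtrack_free p")
    case False
    then obtain xs a b ys where p: "p = xs @ a # b # a # ys" using not_backtrack_free_split by blast
    define p' where "p' = xs @ a # ys"
    have w1: "is_walk E (xs @ [a])" and w2: "is_walk E (a # b # a # ys)"
      using less.prems is_walk_append[of E xs a "b # a # ys"] unfolding p by simp_all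
    then have "is_walk E p'"
      unfolding p'_def using is_walk_append[of E xs a ys] by simp
    moreover have "length p' < length p" unfolding p p'_def by simp
    ultimately obtain q where q: "is_walk E q \<and> backtrack_free q \<and> hd q = hd p' \<and> last q = last p' \<and>
      walk_weight len q \<le> walk_weight len p' \<and> walk_edges q \<subseteq> walk_edges p'"
      using less.hyps by blast
    have "walk_weight len p = walk_weight len (xs @ [a]) + (len a b + (len b a + walk_weight len (a # ys)))"
      unfolding p using walk_weight_append[of len xs a "b # a # ys"] by simp
    moreover have "walk_weight len p' = walk_weight len (xs @ [a]) + walk_weight len (a # ys)"
      unfolding p'_def using walk_weight_append[of len xs a ys] by simp
    moreover have "0 < len a b" "0 < len b a" using w2 len_pos edge_sym by auto
    ultimately have "walk_weight len p' \<le> walk_weight len p" by simp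
    moreover have "walk_edges p' \<subseteq> walk_edges p"
      unfolding p p'_def using walk_edges_append[of xs a ys] walk_edges_append[of xs a "b # a # ys"]
      by auto
    moreover have "hd p' = hd p" "last p' = last p" unfolding p p'_def by (cases xs; simp)+
    ultimately show ?thesis using q by (metis order.trans)
  qed (use less.prems in blast)
qed

lemma walk_weights_bdd_below: "bdd_below {walk_weight len p | p. is_walk E p \<and> hd p = u \<and> last p = v}"
  by (rule bdd_belowI[of _ 0]) (auto intro: walk_weight_nonneg)

lemma dist_le_walk_weight: "is_walk E p \<Longrightarrow> d (hd p) (last p) \<le> walk_weight len p"
  unfolding tree_dist_def by (rule cInf_lower[OF _ walk_weights_bdd_below]) blast

lemma dist_backtrack_free_walk:
  assumes q: "is_walk E q" "backtrack_free q"
  shows "d (hd q) (last q) = walk_weight len q"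
  unfolding tree_dist_def
proof (rule cInf_eq_minimum)
  fix x assume "x \<in> {walk_weight len p |p. is_walk E p \<and> hd p = hd q \<and> last p = last q}"
  then obtain p where p: "x = walk_weight len p" "is_walk E p" "hd p = hd q" "last p = last q"
    by blast
  then obtain q' where q': "is_walk E q'" "backtrack_free q'" "hd q' = hd p" "last q' = last p"
    "walk_weight len q' \<le> walk_weight len p"
    using reduce_walk by blast
  then have "q' = q" using backtrack_free_walk_unique[OF q'(1,2) q] p by simp
  then show "walk_weight len q \<le> x" using q' p by simp
qed (use q in blast)

lemma backtrack_free_walk_exists:
  assumes "u \<in> V" "v \<in> V"
  shows "\<exists>q. is_walk E q \<and> backtrack_free q \<and> hd q = u \<and> last q = v"
proof -
  obtain p where "is_walk E p" "hd p = u" "last p = v" using walk_exists assms by blast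
  then show ?thesis using reduce_walk by metis
qed

lemma dist_nonneg: "u \<in> V \<Longrightarrow> v \<in> V \<Longrightarrow> 0 \<le> d u v"
  using backtrack_free_walk_exists dist_backtrack_free_walk walk_weight_nonneg by metis

lemma dist_self: "d u u = 0"
  using dist_backtrack_free_walk[of "[u]"] by simp

lemma dist_le_len: "E u v \<Longrightarrow> d u v \<le> len u v"
  using dist_le_walk_weight[of "[u, v]"] by simp

lemma dist_commute:
  assumes "u \<in> V" "v \<in> V"
  shows "d u v = d v u"
proof -
  obtain q where q: "is_walk E q" "backtrack_free q" "hd q = u" "last q = v"
    using backtrack_free_walk_exists assms by blast
  have "q \<noteq> []" using q by auto
  have "d v u = walk_weight len (rev q)"
    using dist_backtrack_free_walk[OF is_walk_rev[of E, OF edge_sym q(1)] backtrack_free_rev[OF q(2)]]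
      q \<open>q \<noteq> []\<close> by (simp add: hd_rev last_rev)
  also have "\<dots> = d u v"
    using walk_weight_rev[OF len_sym q(1)] dist_backtrack_free_walk[OF q(1,2)] q by simp
  finally show ?thesis by simp
qed

lemma dist_triangle:
  assumes "u \<in> V" "v \<in> V" "w \<in> V"
  shows "d u w \<le> d u v + d v w"
proof -
  obtain q1 where q1: "is_walk E q1" "backtrack_free q1" "hd q1 = u" "last q1 = v"
    using backtrack_free_walk_exists assms by blast
  obtain q2 where q2: "is_walk E q2" "backtrack_free q2" "hd q2 = v" "last q2 = w"
    using backtrack_free_walk_exists assms by blast
  obtain xs where xs: "q1 = xs @ [v]"
    using q1(1,4) by (cases q1 rule: rev_cases) auto
  obtain ys where ys: "q2 = v # ys"
    using q2(1,3) by (cases q2) auto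
  have "is_walk E (xs @ v # ys)"
    using is_walk_append[of E xs v ys] q1(1) q2(1) xs ys by simp
  then have "d u w \<le> walk_weight len (xs @ v # ys)"
    using dist_le_walk_weight[of "xs @ v # ys"] q1(3) q2(4) xs ys by (cases xs) auto
  also have "\<dots> = walk_weight len q1 + walk_weight len q2"
    using walk_weight_append[of len xs v ys] xs ys by simp
  also have "\<dots> = d u v + d v w"
    using dist_backtrack_free_walk[OF q1(1,2)] dist_backtrack_free_walk[OF q2(1,2)] q1 q2 by simp
  finally show ?thesis .
qed

end

section \<open>Isometric group actions on trees\<close>

locale tree_action =
  fixes G :: "('g, 'b) monoid_scheme" and V :: "'v set" and E :: "'v \<Rightarrow> 'v \<Rightarrow> bool"
    and len :: "'v \<Rightarrow> 'v \<Rightarrow> real" and \<phi> :: "'g \<Rightarrow> 'v \<Rightarrow> 'v"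
  assumes group: "group G" and metric_G_tree: "metric_G_tree G V E len \<phi>"
begin

sublocale metric_tree V E len
  using metric_G_tree unfolding metric_G_tree_def by unfold_locales simp

sublocale group G by (rule group)

lemma act_bij: "g \<in> carrier G \<Longrightarrow> bij_betw (\<phi> g) V V"
  and act_edge_iff: "g \<in> carrier G \<Longrightarrow> u \<in> V \<Longrightarrow> v \<in> V \<Longrightarrow> E (\<phi> g u) (\<phi> g v) \<longleftrightarrow> E u v"
  and act_len: "g \<in> carrier G \<Longrightarrow> E u v \<Longrightarrow> len (\<phi> g u) (\<phi> g v) = len u v"
  and act_one: "v \<in> V \<Longrightarrow> \<phi> \<one>\<^bsub>G\<^esub> v = v"
  and act_mult: "g \<in> carrier G \<Longrightarrow> h \<in> carrier G \<Longrightarrow> v \<in> V \<Longrightarrow> \<phi> (g \<otimes>\<^bsub>G\<^esub> h) v = \<phi> g (\<phi> h v)"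
  using metric_G_tree unfolding metric_G_tree_def by auto

lemma act_in_V: "g \<in> carrier G \<Longrightarrow> v \<in> V \<Longrightarrow> \<phi> g v \<in> V"
  using act_bij bij_betwE by blast

lemma act_inj_on: "g \<in> carrier G \<Longrightarrow> inj_on (\<phi> g) V"
  using act_bij bij_betw_def by blast

lemma act_edge: "g \<in> carrier G \<Longrightarrow> E u v \<Longrightarrow> E (\<phi> g u) (\<phi> g v)"
  using act_edge_iff edge_in_V by blast

lemma act_inv_act: "g \<in> carrier G \<Longrightarrow> v \<in> V \<Longrightarrow> \<phi> (inv\<^bsub>G\<^esub> g) (\<phi> g v) = v"
  by (metis act_mult act_one inv_closed l_inv)

lemma act_pow_Suc: "h \<in> carrier G \<Longrightarrow> v \<in> V \<Longrightarrow> \<phi> (h [^]\<^bsub>G\<^esub> Suc n) v = \<phi> (h [^]\<^bsub>G\<^esub> n) (\<phi> h v)"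
  by (simp add: act_mult)

lemma dist_act:
  assumes g: "g \<in> carrier G" and "u \<in> V" "v \<in> V"
  shows "d (\<phi> g u) (\<phi> g v) = d u v"
proof -
  obtain q where q: "is_walk E q" "backtrack_free q" "hd q = u" "last q = v"
    using backtrack_free_walk_exists assms by blast
  have "set q \<subseteq> V" using walk_in_V q assms by blast
  then have "backtrack_free (map (\<phi> g) q)"
    using backtrack_free_map[OF q(2)] act_inj_on[OF g] inj_on_subset by blast
  moreover have "is_walk E (map (\<phi> g) q)" using is_walk_map[OF q(1)] act_edge[OF g] by blast
  moreover have "q \<noteq> []" using q by auto
  ultimately have "d (\<phi> g u) (\<phi> g v) = walk_weight len (map (\<phi> g) q)"
    using dist_backtrack_free_walk[of "map (\<phi> g) q"] q by (simp add: hd_map last_map)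
  also have "\<dots> = walk_weight len q" using walk_weight_map[OF q(1)] act_len[OF g] by blast
  finally show ?thesis using dist_backtrack_free_walk[OF q(1,2)] q by simp
qed

lemma dist_pow_le:
  assumes "h \<in> carrier G" "v \<in> V"
  shows "d v (\<phi> (h [^]\<^bsub>G\<^esub> n) v) \<le> real n * d v (\<phi> h v)"
proof (induction n)
  case (Suc n)
  have "d v (\<phi> (h [^]\<^bsub>G\<^esub> Suc n) v)
      \<le> d v (\<phi> (h [^]\<^bsub>G\<^esub> n) v) + d (\<phi> (h [^]\<^bsub>G\<^esub> n) v) (\<phi> (h [^]\<^bsub>G\<^esub> n) (\<phi> h v))"
    using dist_triangle act_pow_Suc act_in_V assms by simp
  also have "d (\<phi> (h [^]\<^bsub>G\<^esub> n) v) (\<phi> (h [^]\<^bsub>G\<^esub> n) (\<phi> h v)) = d v (\<phi> h v)"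
    using dist_act act_in_V assms by simp
  finally show ?case using Suc by (simp add: algebra_simps)
qed (simp add: act_one assms dist_self)

lemma trans_length_le: "h \<in> carrier G \<Longrightarrow> v \<in> V \<Longrightarrow> trans_length V E len \<phi> h \<le> d v (\<phi> h v)"
  unfolding trans_length_def
  by (rule cINF_lower) (auto intro!: bdd_belowI2[of _ 0] dist_nonneg act_in_V)

lemma trans_length_greatest:
  "(\<And>v. v \<in> V \<Longrightarrow> m \<le> d v (\<phi> h v)) \<Longrightarrow> m \<le> trans_length V E len \<phi> h"
  unfolding trans_length_def by (rule cINF_greatest[OF V_nonempty])

lemma trans_length_nonneg: "h \<in> carrier G \<Longrightarrow> 0 \<le> trans_length V E len \<phi> h"
  by (rule trans_length_greatest) (simp add: dist_nonneg act_in_V)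

definition stabilizer :: "'v set \<Rightarrow> 'g set" where
  "stabilizer A = {k \<in> carrier G. \<phi> k ` A = A}"

lemma stabilizer_subgroup:
  assumes A: "A \<subseteq> V"
  shows "subgroup (stabilizer A) G"
proof (rule subgroupI)
  have "\<phi> \<one>\<^bsub>G\<^esub> ` A = id ` A"
    using act_one A by (intro image_cong) auto
  then show "stabilizer A \<noteq> {}" unfolding stabilizer_def by auto
next
  fix k assume k: "k \<in> stabilizer A"
  have "\<phi> (inv\<^bsub>G\<^esub> k) ` \<phi> k ` A = id ` A"
    unfolding image_image using act_inv_act k A by (intro image_cong) (auto simp: stabilizer_def)
  then show "inv\<^bsub>G\<^esub> k \<in> stabilizer A" using k unfolding stabilizer_def by simp
next
  fix k l assume k: "k \<in> stabilizer A" and l: "l \<in> stabilizer A"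
  have "\<phi> (k \<otimes>\<^bsub>G\<^esub> l) ` A = \<phi> k ` \<phi> l ` A"
    unfolding image_image using act_mult k l A by (intro image_cong) (auto simp: stabilizer_def)
  then show "k \<otimes>\<^bsub>G\<^esub> l \<in> stabilizer A" using k l unfolding stabilizer_def by simp
qed (auto simp: stabilizer_def)


lemma elliptic_displacement_bounded:
  assumes "elliptic V E \<phi> K"
  shows "\<exists>w\<in>V. \<exists>l\<ge>0. \<forall>k\<in>K. d w (\<phi> k w) \<le> l"
  using assms unfolding elliptic_def
proof
  assume "\<exists>v\<in>V. \<forall>k\<in>K. \<phi> k v = v"
  then obtain v where "v \<in> V" "\<forall>k\<in>K. \<phi> k v = v" by blast
  then show ?thesis using dist_self by (intro bexI[of _ v] exI[of _ 0]) auto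
next
  assume "\<exists>u v. E u v \<and> (\<forall>k\<in>K. \<phi> k ` {u, v} = {u, v})"
  then obtain u v where uv: "E u v" "\<forall>k\<in>K. \<phi> k ` {u, v} = {u, v}" by blast
  have "d u (\<phi> k u) \<le> len u v" if "k \<in> K" for k
  proof -
    have "\<phi> k u \<in> {u, v}" using uv that by blast
    then show ?thesis using dist_self dist_le_len[OF uv(1)] len_pos[OF uv(1)] by auto
  qed
  then show ?thesis
    using edge_in_V[OF uv(1)] len_pos[OF uv(1)] by (intro bexI[of _ u] exI[of _ "len u v"]) auto
qed

lemma elliptic_generate:
  assumes K: "K \<subseteq> carrier G" and ell: "elliptic V E \<phi> K"
  shows "elliptic V E \<phi> (generate G K)"
proof -
  obtain A where A: "A \<subseteq> V" "K \<subseteq> stabilizer A"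
    and shape: "(\<exists>v\<in>V. A = {v}) \<or> (\<exists>u v. E u v \<and> A = {u, v})"
  proof (cases "\<exists>v\<in>V. \<forall>k\<in>K. \<phi> k v = v")
    case True
    then obtain v where "v \<in> V" "\<forall>k\<in>K. \<phi> k v = v" by blast
    then show ?thesis using K by (intro that[of "{v}"]) (auto simp: stabilizer_def)
  next
    case False
    then obtain u v where "E u v" "\<forall>k\<in>K. \<phi> k ` {u, v} = {u, v}"
      using ell unfolding elliptic_def by blast
    then show ?thesis using K edge_in_V by (intro that[of "{u, v}"]) (auto simp: stabilizer_def)
  qed
  have "generate G K \<subseteq> stabilizer A"
    using generate_subgroup_incl[OF A(2) stabilizer_subgroup[OF A(1)]] .
  then have stab: "\<forall>k\<in>generate G K. \<phi> k ` A = A" unfolding stabilizer_def by blast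
  from shape show ?thesis
  proof (elim disjE bexE exE conjE)
    fix v assume "v \<in> V" "A = {v}"
    then show ?thesis using stab unfolding elliptic_def by auto
  next
    fix u v assume "E u v" "A = {u, v}"
    then show ?thesis using stab unfolding elliptic_def by blast
  qed
qed

end

section \<open>Elliptic and hyperbolic elements\<close>

context tree_action
begin

fun translates_concat :: "'g \<Rightarrow> 'v list \<Rightarrow> nat \<Rightarrow> 'v list" where
  "translates_concat h \<sigma> 0 = [hd \<sigma>]"
| "translates_concat h \<sigma> (Suc n) = butlast (translates_concat h \<sigma> n) @ map (\<phi> (h [^]\<^bsub>G\<^esub> n)) \<sigma>"

lemma translates_concat_walk:
  assumes h: "h \<in> carrier G" and \<sigma>: "is_walk E \<sigma>" "hd \<sigma> = a" "last \<sigma> = \<phi> h a" and a: "a \<in> V"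
  shows "is_walk E (translates_concat h \<sigma> n) \<and> hd (translates_concat h \<sigma> n) = a \<and>
    last (translates_concat h \<sigma> n) = \<phi> (h [^]\<^bsub>G\<^esub> n) a \<and>
    walk_weight len (translates_concat h \<sigma> n) = real n * walk_weight len \<sigma>"
proof (induction n)
  case 0
  then show ?case using \<sigma> a by (simp add: act_one)
next
  case (Suc n)
  let ?T = "translates_concat h \<sigma> n" and ?g = "h [^]\<^bsub>G\<^esub> n"
  obtain B where B: "?T = B @ [\<phi> ?g a]"
    using Suc.IH by (cases ?T rule: rev_cases) auto
  obtain \<tau> where \<tau>: "map (\<phi> ?g) \<sigma> = \<phi> ?g a # \<tau>"
    using \<sigma> by (cases \<sigma>) auto
  have T: "translates_concat h \<sigma> (Suc n) = B @ \<phi> ?g a # \<tau>" using B \<tau> by simp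
  have g: "?g \<in> carrier G" using h by simp
  have walk\<tau>: "is_walk E (\<phi> ?g a # \<tau>)"
    using is_walk_map[of E \<sigma> E "\<phi> ?g", OF \<sigma>(1) act_edge[OF g]] \<tau> by simp
  have "is_walk E (translates_concat h \<sigma> (Suc n))"
    unfolding T using is_walk_append[of E B "\<phi> ?g a" \<tau>] walk\<tau> Suc.IH B by simp
  moreover have "hd (translates_concat h \<sigma> (Suc n)) = a"
    unfolding T using Suc.IH B by (cases B) auto
  moreover have "last (translates_concat h \<sigma> (Suc n)) = \<phi> (h [^]\<^bsub>G\<^esub> Suc n) a"
    using \<sigma> h a act_mult[of "h [^]\<^bsub>G\<^esub> n" h a] by (cases \<sigma> rule: rev_cases) auto
  moreover have "walk_weight len (\<phi> ?g a # \<tau>) = walk_weight len \<sigma>"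
    using walk_weight_map[OF \<sigma>(1), of len "\<phi> ?g"] act_len[OF g] \<tau> by simp
  then have "walk_weight len (translates_concat h \<sigma> (Suc n)) = real (Suc n) * walk_weight len \<sigma>"
    unfolding T using walk_weight_append[of len B "\<phi> ?g a" \<tau>] Suc.IH B by (simp add: algebra_simps)
  ultimately show ?case by blast
qed

lemma translates_concat_backtrack_free:
  assumes h: "h \<in> carrier G" and \<sigma>: "is_walk E \<sigma>" "backtrack_free \<sigma>"
    and \<sigma>_hd: "\<sigma> = a # c # \<sigma>1" and \<sigma>_last: "\<sigma> = \<sigma>0 @ [p, \<phi> h a]" and a: "a \<in> V"
    and no_turn: "p \<noteq> \<phi> h c"
  shows "backtrack_free (translates_concat h \<sigma> n) \<and>
    (0 < n \<longrightarrow> (\<exists>xs. translates_concat h \<sigma> n = xs @ [\<phi> (h [^]\<^bsub>G\<^esub> (n - 1)) p, \<phi> (h [^]\<^bsub>G\<^esub> n) a]))"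
proof (induction n)
  case (Suc n)
  let ?g = "h [^]\<^bsub>G\<^esub> n"
  have last\<sigma>: "last \<sigma> = \<phi> h a" using \<sigma>_last by simp
  have sV: "set \<sigma> \<subseteq> V" using walk_in_V[OF \<sigma>(1)] \<sigma>_hd a by simp
  have bf\<tau>: "backtrack_free (map (\<phi> ?g) \<sigma>)"
    using backtrack_free_map[OF \<sigma>(2)] act_inj_on[of ?g] sV h inj_on_subset by blast
  have ends: "\<exists>xs. translates_concat h \<sigma> (Suc n) = xs @ [\<phi> (h [^]\<^bsub>G\<^esub> (Suc n - 1)) p, \<phi> (h [^]\<^bsub>G\<^esub> Suc n) a]"
    using \<sigma>_last h a act_mult[of "h [^]\<^bsub>G\<^esub> n" h a] by auto
  have "backtrack_free (translates_concat h \<sigma> (Suc n))"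
  proof (cases n)
    case 0
    have "map (\<phi> \<one>\<^bsub>G\<^esub>) \<sigma> = \<sigma>" using act_one sV by (intro map_idI) blast
    then show ?thesis using 0 \<sigma>(2) \<sigma>_hd by simp
  next
    case (Suc m)
    obtain xs where xs: "translates_concat h \<sigma> n = xs @ [\<phi> (h [^]\<^bsub>G\<^esub> m) p, \<phi> ?g a]"
      using Suc.IH Suc by auto
    have "p \<in> set \<sigma>" by (subst \<sigma>_last) simp
    moreover have "c \<in> set \<sigma>" by (subst \<sigma>_hd) simp
    ultimately have pc: "p \<in> V" "\<phi> h c \<in> V" using sV act_in_V h by auto
    have "\<phi> ?g c = \<phi> (h [^]\<^bsub>G\<^esub> m) (\<phi> h c)"
      using act_pow_Suc h \<open>c \<in> set \<sigma>\<close> sV Suc by auto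
    then have turn: "\<phi> (h [^]\<^bsub>G\<^esub> m) p \<noteq> \<phi> ?g c"
      using no_turn pc act_inj_on[of "h [^]\<^bsub>G\<^esub> m"] h by (auto simp: inj_on_eq_iff)
    have "backtrack_free (xs @ [\<phi> (h [^]\<^bsub>G\<^esub> m) p, \<phi> ?g a])" using Suc.IH xs by simp
    moreover have "backtrack_free (\<phi> ?g a # \<phi> ?g c # map (\<phi> ?g) \<sigma>1)" using bf\<tau> \<sigma>_hd by simp
    ultimately have "backtrack_free (xs @ \<phi> (h [^]\<^bsub>G\<^esub> m) p # \<phi> ?g a # \<phi> ?g c # map (\<phi> ?g) \<sigma>1)"
      using turn by (rule backtrack_free_join)
    moreover have "translates_concat h \<sigma> (Suc n) =
        xs @ \<phi> (h [^]\<^bsub>G\<^esub> m) p # \<phi> ?g a # \<phi> ?g c # map (\<phi> ?g) \<sigma>1"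
      using xs \<sigma>_hd by (simp add: butlast_append)
    ultimately show ?thesis by simp
  qed
  then show ?case using ends by blast
qed simp

text \<open>The hypothesis \<open>p \<noteq> \<phi> h c\<close> says that \<open>\<sigma>\<close> followed by \<open>h \<sigma>\<close> does not backtrack at
  \<open>h a\<close>; then \<open>a\<close> lies on an axis of \<open>h\<close>.\<close>

lemma dist_pow_translation_segment:
  assumes h: "h \<in> carrier G" and \<sigma>: "is_walk E \<sigma>" "backtrack_free \<sigma>"
    and \<sigma>_hd: "\<sigma> = a # c # \<sigma>1" and \<sigma>_last: "\<sigma> = \<sigma>0 @ [p, \<phi> h a]" and a: "a \<in> V"
    and no_turn: "p \<noteq> \<phi> h c"
  shows "d a (\<phi> (h [^]\<^bsub>G\<^esub> n) a) = real n * walk_weight len \<sigma>"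
proof -
  have "hd \<sigma> = a" using \<sigma>_hd by simp
  moreover have "last \<sigma> = \<phi> h a" using \<sigma>_last by simp
  ultimately show ?thesis
    using translates_concat_walk[OF h \<sigma>(1) _ _ a] translates_concat_backtrack_free[OF assms]
      dist_backtrack_free_walk by metis
qed

end

context tree_action
begin

lemma elliptic_if_walk_folds:
  assumes q: "is_walk E q" "length q = Suc L" "set q \<subseteq> V"
    and fold: "\<And>i. i \<le> k \<Longrightarrow> \<phi> h (q ! i) = q ! (L - i)" and k: "L \<le> 2 * k"
  shows "elliptic V E \<phi> {h}"
proof (cases "even L")
  case True
  then obtain c where c: "L = 2 * c" by blast
  then have "\<phi> h (q ! c) = q ! c" using fold[of c] k by simp
  moreover have "q ! c \<in> V" using q c by (simp add: subsetD)
  ultimately show ?thesis unfolding elliptic_def by blast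
next
  case False
  then obtain c where c: "L = 2 * c + 1" by (metis oddE)
  have "\<phi> h (q ! c) = q ! Suc c" "\<phi> h (q ! Suc c) = q ! c"
    using fold[of c] fold[of "Suc c"] c k by simp_all
  moreover have "E (q ! c) (q ! Suc c)" using is_walk_nth[OF q(1)] q(2) c by simp
  ultimately show ?thesis
    unfolding elliptic_def by (intro disjI2 exI[of _ "q ! c"] exI[of _ "q ! Suc c"]) auto
qed

text \<open>The middle part of \<open>q\<close> left over after folding off \<open>k\<close> edges at each end is a segment
  whose translates by \<open>h\<close> meet without backtracking.\<close>

lemma translation_axis_if_walk_unfolds:
  assumes h: "h \<in> carrier G" and q: "is_walk E q" "backtrack_free q" "length q = Suc L" "set q \<subseteq> V"
    and fold: "\<phi> h (q ! k) = q ! (L - k)" and unfold: "\<phi> h (q ! Suc k) \<noteq> q ! (L - Suc k)"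
    and k: "2 * k < L"
  shows "\<exists>a\<in>V. \<forall>n. real n * d a (\<phi> h a) \<le> d a (\<phi> (h [^]\<^bsub>G\<^esub> n) a)"
proof -
  define a where "a = q ! k"
  define \<sigma> where "\<sigma> = drop k (take (L - k + 1) q)"
  have \<sigma>_nth: "i < length \<sigma> \<Longrightarrow> \<sigma> ! i = q ! (k + i)" for i
    unfolding \<sigma>_def using q(3) k by simp
  have \<sigma>_len: "length \<sigma> = Suc (Suc (L - 2 * k - 1))" unfolding \<sigma>_def using q(3) k by simp
  have \<sigma>_walk: "is_walk E \<sigma>" "backtrack_free \<sigma>" unfolding \<sigma>_def
    using is_walk_drop[OF is_walk_take[OF q(1)]] backtrack_free_drop[OF backtrack_free_take[OF q(2)]]
      q(3) k by auto
  obtain x c \<sigma>1 where \<sigma>_hd: "\<sigma> = x # c # \<sigma>1"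
    using \<sigma>_len by (auto simp: length_Suc_conv)
  then have x: "x = a" and c: "c = q ! Suc k"
    using \<sigma>_nth[of 0] \<sigma>_nth[of 1] unfolding a_def by simp_all
  obtain y p r where "rev \<sigma> = y # p # r"
    using \<sigma>_len by (cases "rev \<sigma>" rule: walk_edges.cases) auto
  then have \<sigma>_last: "\<sigma> = rev r @ [p, y]" by (metis append.assoc append_Cons append_Nil rev.simps rev_rev_ident)
  have lr: "k + length r = L - Suc k" using \<sigma>_len k unfolding \<sigma>_last by simp
  have "p = \<sigma> ! length r" "y = \<sigma> ! Suc (length r)" unfolding \<sigma>_last by (simp_all add: nth_append)
  then have p: "p = q ! (L - Suc k)" and y: "y = \<phi> h a"
    using \<sigma>_nth[of "length r"] \<sigma>_nth[of "Suc (length r)"] lr k fold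
    unfolding \<sigma>_last a_def by (simp_all add: Suc_diff_Suc)
  have a: "a \<in> V" using q(3,4) k unfolding a_def by (simp add: subsetD)
  have "p \<noteq> \<phi> h c" using unfold unfolding p c by simp
  then have translate: "d a (\<phi> (h [^]\<^bsub>G\<^esub> n) a) = real n * walk_weight len \<sigma>" for n
    using dist_pow_translation_segment[OF h \<sigma>_walk \<sigma>_hd[unfolded x] \<sigma>_last[unfolded y] a] by blast
  have "hd \<sigma> = a" using \<sigma>_hd x by simp
  moreover have "last \<sigma> = \<phi> h a" using \<sigma>_last y by simp
  ultimately have "d a (\<phi> h a) \<le> walk_weight len \<sigma>"
    using dist_le_walk_weight[OF \<sigma>_walk(1)] by simp
  then have "real n * d a (\<phi> h a) \<le> d a (\<phi> (h [^]\<^bsub>G\<^esub> n) a)" for n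
    unfolding translate by (simp add: mult_left_mono)
  then show ?thesis using a by blast
qed

lemma elliptic_or_translation_axis:
  assumes h: "h \<in> carrier G"
  shows "elliptic V E \<phi> {h} \<or> (\<exists>a\<in>V. \<forall>n. real n * d a (\<phi> h a) \<le> d a (\<phi> (h [^]\<^bsub>G\<^esub> n) a))"
proof -
  obtain w where w: "w \<in> V" using V_nonempty by blast
  obtain q where q: "is_walk E q" "backtrack_free q" "hd q = w" "last q = \<phi> h w"
    using backtrack_free_walk_exists w act_in_V h by blast
  define L where "L = length q - 1"
  have lq: "length q = Suc L" using q(1) L_def by (cases q) auto
  have sq: "set q \<subseteq> V" using walk_in_V q w by simp
  define P where "P i \<longleftrightarrow> \<phi> h (q ! i) = q ! (L - i)" for i
  \<comment> \<open>\<open>h\<close> maps the first \<open>k\<close> edges of \<open>q\<close> onto its last \<open>k\<close> edges, reversed\<close>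
  define k where "k = (LEAST j. j = L \<or> \<not> P (Suc j))"
  have Qk: "k = L \<or> \<not> P (Suc k)" unfolding k_def by (rule LeastI[of _ L]) simp
  have Pk: "i \<le> k \<Longrightarrow> P i" for i
  proof (induction i)
    case 0
    have "q \<noteq> []" using lq by auto
    then show ?case using q lq hd_conv_nth[of q] last_conv_nth[of q] unfolding P_def by simp
  next
    case (Suc i)
    then have "\<not> (i = L \<or> \<not> P (Suc i))" unfolding k_def by (intro not_less_Least) simp
    then show ?case by simp
  qed
  show ?thesis
  proof (cases "L \<le> 2 * k")
    case True
    then show ?thesis using elliptic_if_walk_folds[OF q(1) lq sq] Pk unfolding P_def by blast
  next
    case False
    then show ?thesis
      using translation_axis_if_walk_unfolds[OF h q(1,2) lq sq, of k] Pk[of k] Qk unfolding P_def by auto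
  qed
qed

end

lemma ex_uniform_bound_finite:
  fixes Q :: "'a \<Rightarrow> real \<Rightarrow> bool"
  assumes "finite A" and "\<And>x. x \<in> A \<Longrightarrow> \<exists>D. Q x D"
    and mono: "\<And>x D D'. Q x D \<Longrightarrow> D \<le> D' \<Longrightarrow> Q x D'"
  shows "\<exists>D. \<forall>x\<in>A. Q x D"
  using assms(1,2)
proof (induction A rule: finite_induct)
  case (insert x A)
  obtain D1 D2 where "\<forall>y\<in>A. Q y D1" "Q x D2" using insert by blast
  then have "\<forall>y\<in>insert x A. Q y (max D1 D2)" using mono by (metis insert_iff max.cobounded1 max.cobounded2)
  then show ?case by blast
qed simp

context tree_action
begin

lemma trans_length_elliptic_bounded:
  assumes Hs: "peripheral_structure G Hs"
    and Hs_elliptic: "\<And>i. i < length Hs \<Longrightarrow> elliptic V E \<phi> (Hs ! i)"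
    and elliptic_conj: "\<And>K. subgroup K G \<Longrightarrow> elliptic V E \<phi> K \<Longrightarrow>
          \<exists>i<length Hs. \<exists>x\<in>carrier G. K \<subseteq> conjugate G x (Hs ! i)"
  shows "\<exists>M. \<forall>h\<in>carrier G. elliptic V E \<phi> {h} \<longrightarrow> trans_length V E len \<phi> h \<le> M"
proof -
  have "\<exists>M. \<forall>i\<in>{..<length Hs}. \<exists>w\<in>V. \<forall>k\<in>Hs ! i. d w (\<phi> k w) \<le> M"
  proof (rule ex_uniform_bound_finite)
    fix i assume "i \<in> {..<length Hs}"
    then show "\<exists>M. \<exists>w\<in>V. \<forall>k\<in>Hs ! i. d w (\<phi> k w) \<le> M"
      using elliptic_displacement_bounded[OF Hs_elliptic] by fastforce
  next
    fix i and D D' :: real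
    assume "\<exists>w\<in>V. \<forall>k\<in>Hs ! i. d w (\<phi> k w) \<le> D" "D \<le> D'"
    then show "\<exists>w\<in>V. \<forall>k\<in>Hs ! i. d w (\<phi> k w) \<le> D'" by (meson order_trans)
  qed simp
  then obtain M where M: "\<And>i. i < length Hs \<Longrightarrow> \<exists>w\<in>V. \<forall>k\<in>Hs ! i. d w (\<phi> k w) \<le> M" by auto
  have "trans_length V E len \<phi> h \<le> M" if h: "h \<in> carrier G" and ell: "elliptic V E \<phi> {h}" for h
  proof -
    have "elliptic V E \<phi> (generate G {h})" using elliptic_generate ell h by simp
    moreover have "subgroup (generate G {h}) G" using h by (simp add: generate_is_subgroup)
    ultimately obtain i x where ix: "i < length Hs" "x \<in> carrier G" "generate G {h} \<subseteq> conjugate G x (Hs ! i)"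
      using elliptic_conj by blast
    moreover have "h \<in> generate G {h}" by (simp add: generate.incl)
    ultimately obtain k where k: "k \<in> Hs ! i" "h = x \<otimes>\<^bsub>G\<^esub> k \<otimes>\<^bsub>G\<^esub> inv\<^bsub>G\<^esub> x"
      unfolding conjugate_def by blast
    have "subgroup (Hs ! i) G" using Hs ix(1) unfolding peripheral_structure_def by simp
    then have kG: "k \<in> carrier G" using k(1) subgroup.subset by blast
    obtain w where w: "w \<in> V" "\<forall>k\<in>Hs ! i. d w (\<phi> k w) \<le> M" using M ix(1) by blast
    have "\<phi> h (\<phi> x w) = \<phi> x (\<phi> k w)"
      using k(2) ix(2) kG w(1) by (simp add: act_mult act_in_V act_inv_act m_assoc)
    then have "trans_length V E len \<phi> h \<le> d w (\<phi> k w)"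
      using trans_length_le[OF h act_in_V[OF ix(2) w(1)]] dist_act ix(2) w(1) kG act_in_V by simp
    then show ?thesis using w k(1) by fastforce
  qed
  then show ?thesis by blast
qed

end

section \<open>Comparing two trees\<close>

context tree_action
begin

definition edges_in_orbit :: "('v \<times> 'v) set \<Rightarrow> 'v list \<Rightarrow> bool" where
  "edges_in_orbit F p \<longleftrightarrow>
     (\<forall>(x, x') \<in> walk_edges p. \<exists>z\<in>carrier G. \<exists>(b, b') \<in> F. x = \<phi> z b \<and> x' = \<phi> z b')"

lemma edges_in_orbit_if_subset:
  assumes "walk_edges p \<subseteq> F" "F \<subseteq> V \<times> V"
  shows "edges_in_orbit F p"
  unfolding edges_in_orbit_def
proof clarify
  fix x x' assume "(x, x') \<in> walk_edges p"
  with assms have "(x, x') \<in> F" "x \<in> V" "x' \<in> V" by auto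
  then show "\<exists>z\<in>carrier G. \<exists>(b, b') \<in> F. x = \<phi> z b \<and> x' = \<phi> z b'"
    using act_one by (intro bexI[of _ "\<one>\<^bsub>G\<^esub>"] bexI[of _ "(x, x')"]) auto
qed

lemma edges_in_orbit_subwalk:
  assumes "edges_in_orbit F p" "walk_edges q \<subseteq> walk_edges p"
  shows "edges_in_orbit F q"
  using assms unfolding edges_in_orbit_def by blast

lemma edges_in_orbit_rev:
  assumes p: "edges_in_orbit F p" and F: "F\<inverse> \<subseteq> F"
  shows "edges_in_orbit F (rev p)"
  unfolding edges_in_orbit_def walk_edges_rev
proof clarify
  fix x x' assume "(x', x) \<in> walk_edges p"
  then obtain z b b' where "z \<in> carrier G" "(b, b') \<in> F" "x' = \<phi> z b" "x = \<phi> z b'"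
    using p unfolding edges_in_orbit_def by blast
  moreover from this have "(b', b) \<in> F" using F by blast
  ultimately show "\<exists>z\<in>carrier G. \<exists>(b, b') \<in> F. x = \<phi> z b \<and> x' = \<phi> z b'" by blast
qed

lemma edges_in_orbit_map:
  assumes z: "z \<in> carrier G" and F: "F \<subseteq> V \<times> V" and p: "edges_in_orbit F p"
  shows "edges_in_orbit F (map (\<phi> z) p)"
  unfolding edges_in_orbit_def
proof clarify
  fix x x' assume "(x, x') \<in> walk_edges (map (\<phi> z) p)"
  then obtain u u' where u: "(u, u') \<in> walk_edges p" "x = \<phi> z u" "x' = \<phi> z u'"
    unfolding walk_edges_map by auto
  obtain z' b b' where z': "z' \<in> carrier G" "(b, b') \<in> F" "u = \<phi> z' b" "u' = \<phi> z' b'"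
    using p u(1) unfolding edges_in_orbit_def by blast
  have "x = \<phi> (z \<otimes>\<^bsub>G\<^esub> z') b" "x' = \<phi> (z \<otimes>\<^bsub>G\<^esub> z') b'"
    using u(2,3) z' F act_mult[OF z z'(1)] by auto
  moreover have "z \<otimes>\<^bsub>G\<^esub> z' \<in> carrier G" using z z'(1) by simp
  ultimately show "\<exists>z\<in>carrier G. \<exists>(b, b') \<in> F. x = \<phi> z b \<and> x' = \<phi> z b'"
    using z'(2) by blast
qed

lemma edges_in_orbit_append:
  "edges_in_orbit F (xs @ [x]) \<Longrightarrow> edges_in_orbit F (x # ys) \<Longrightarrow> edges_in_orbit F (xs @ x # ys)"
  unfolding edges_in_orbit_def walk_edges_append[of xs x ys] ball_Un by (rule conjI)

lemma edges_in_orbit_walk_exists: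
  assumes v0: "v0 \<in> V" and S: "S \<subseteq> carrier G" and F: "F \<subseteq> V \<times> V" "F\<inverse> \<subseteq> F"
    and r: "\<And>s. s \<in> S \<Longrightarrow> is_walk E (r s) \<and> hd (r s) = v0 \<and> last (r s) = \<phi> s v0"
    and r_F: "\<And>s. s \<in> S \<Longrightarrow> walk_edges (r s) \<subseteq> F"
  shows "y \<in> generate G S \<Longrightarrow> \<exists>p. is_walk E p \<and> hd p = v0 \<and> last p = \<phi> y v0 \<and> edges_in_orbit F p"
proof (induction rule: generate.induct)
  case one
  have "edges_in_orbit F [v0]" unfolding edges_in_orbit_def by simp
  then show ?case using v0 act_one by (intro exI[of _ "[v0]"]) simp
next
  case (incl s)
  then show ?case using r r_F edges_in_orbit_if_subset[OF _ F(1)] by blast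
next
  case (inv s)
  have s: "s \<in> carrier G" "inv\<^bsub>G\<^esub> s \<in> carrier G" using inv S by auto
  have rs: "is_walk E (r s)" "hd (r s) = v0" "last (r s) = \<phi> s v0" using r inv by auto
  then have "r s \<noteq> []" by auto
  define p where "p = map (\<phi> (inv\<^bsub>G\<^esub> s)) (rev (r s))"
  have "is_walk E (rev (r s))" by (rule is_walk_rev[OF _ rs(1)]) (rule edge_sym)
  then have "is_walk E p"
    unfolding p_def using is_walk_map[of E _ E "\<phi> (inv\<^bsub>G\<^esub> s)"] act_edge[OF s(2)] by blast
  moreover have "hd p = v0" "last p = \<phi> (inv\<^bsub>G\<^esub> s) v0"
    unfolding p_def using \<open>r s \<noteq> []\<close> rs act_inv_act[OF s(1) v0]
    by (simp_all add: hd_map hd_rev last_map last_rev)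
  moreover have "edges_in_orbit F p"
    unfolding p_def using edges_in_orbit_if_subset[OF r_F[OF inv] F(1)]
    by (intro edges_in_orbit_map[OF s(2) F(1)] edges_in_orbit_rev F(2))
  ultimately show ?case by blast
next
  case (eng y1 y2)
  have y: "y1 \<in> carrier G" "y2 \<in> carrier G" using eng.hyps generate_incl[OF S] by blast+
  obtain p1 where p1: "is_walk E p1" "hd p1 = v0" "last p1 = \<phi> y1 v0" "edges_in_orbit F p1"
    using eng.IH by blast
  obtain p2 where p2: "is_walk E p2" "hd p2 = v0" "last p2 = \<phi> y2 v0" "edges_in_orbit F p2"
    using eng.IH by blast
  obtain B where B: "p1 = B @ [\<phi> y1 v0]" using p1(1,3) by (cases p1 rule: rev_cases) auto
  obtain T where T: "map (\<phi> y1) p2 = \<phi> y1 v0 # T" using p2(1,2) by (cases p2) auto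
  define p where "p = B @ \<phi> y1 v0 # T"
  have "is_walk E (\<phi> y1 v0 # T)" using is_walk_map[of E p2 E "\<phi> y1", OF p2(1) act_edge[OF y(1)]] T by simp
  then have "is_walk E p" unfolding p_def using is_walk_append[of E B "\<phi> y1 v0" T] p1(1) B by simp
  moreover have "hd p = v0" unfolding p_def using B p1(2) by (cases B) auto
  moreover have "last p = \<phi> (y1 \<otimes>\<^bsub>G\<^esub> y2) v0"
  proof -
    have "last p = last (map (\<phi> y1) p2)" unfolding p_def T by simp
    also have "\<dots> = \<phi> y1 (\<phi> y2 v0)" using p2(1,3) by (cases p2 rule: rev_cases) auto
    finally show ?thesis using act_mult[OF y v0] by simp
  qed
  moreover have "edges_in_orbit F p"
    unfolding p_def using edges_in_orbit_append p1(4) edges_in_orbit_map[OF y(1) F(1) p2(4)] B T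
    by metis
  ultimately show ?case by blast
qed

lemma walk_length_le_dist_if_edges_in_orbit:
  assumes q: "is_walk E q" "backtrack_free q" "edges_in_orbit F q"
    and F: "\<And>b b'. (b, b') \<in> F \<Longrightarrow> E b b' \<and> l \<le> len b b'"
  shows "real (length q - 1) * l \<le> d (hd q) (last q)"
  unfolding dist_backtrack_free_walk[OF q(1,2)]
proof (rule walk_weight_ge_card_mult[OF q(1)])
  fix x x' assume "(x, x') \<in> walk_edges q"
  then obtain z b b' where "z \<in> carrier G" "(b, b') \<in> F" "x = \<phi> z b" "x' = \<phi> z b'"
    using q(3) unfolding edges_in_orbit_def by blast
  then show "l \<le> len x x'" using act_len F by auto
qed

lemma finite_orbit_cover:
  assumes S: "finite_gen_set G S" and v0: "v0 \<in> V"
  shows "\<exists>F. finite F \<and> (\<forall>(b, b') \<in> F. E b b') \<and>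
    (\<forall>y\<in>carrier G. \<exists>p. is_walk E p \<and> hd p = v0 \<and> last p = \<phi> y v0 \<and> edges_in_orbit F p)"
proof -
  have S: "finite S" "S \<subseteq> carrier G" "generate G S = carrier G"
    using S unfolding finite_gen_set_def by auto
  have "\<forall>s\<in>S. \<exists>q. is_walk E q \<and> hd q = v0 \<and> last q = \<phi> s v0"
  proof
    fix s assume "s \<in> S"
    then have "\<phi> s v0 \<in> V" using S(2) act_in_V v0 by blast
    then show "\<exists>q. is_walk E q \<and> hd q = v0 \<and> last q = \<phi> s v0" using walk_exists[OF v0] by blast
  qed
  from bchoice[OF this] obtain r
    where r: "\<And>s. s \<in> S \<Longrightarrow> is_walk E (r s) \<and> hd (r s) = v0 \<and> last (r s) = \<phi> s v0"
    by blast
  define F where "F = (\<Union>s\<in>S. walk_edges (r s) \<union> (walk_edges (r s))\<inverse>)"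
  have r_F: "walk_edges (r s) \<subseteq> F" if "s \<in> S" for s
    unfolding F_def using that by blast
  have F_sym: "F\<inverse> \<subseteq> F" unfolding F_def by blast
  have FE: "E b b'" if bF: "(b, b') \<in> F" for b b'
  proof -
    obtain s where s: "s \<in> S" "(b, b') \<in> walk_edges (r s) \<or> (b', b) \<in> walk_edges (r s)"
      using bF unfolding F_def by auto
    then have "is_walk E (r s)" using r by blast
    then show ?thesis using s(2) is_walk_edge[of E "r s"] edge_sym by blast
  qed
  have FV: "F \<subseteq> V \<times> V"
  proof (rule subrelI)
    fix b b' assume "(b, b') \<in> F"
    then show "(b, b') \<in> V \<times> V" using FE edge_in_V by blast
  qed
  have "\<exists>p. is_walk E p \<and> hd p = v0 \<and> last p = \<phi> y v0 \<and> edges_in_orbit F p"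
    if "y \<in> carrier G" for y
    using edges_in_orbit_walk_exists[OF v0 S(2) FV F_sym r r_F] S(3) that by blast
  moreover have "finite F"
    unfolding F_def using S(1) by (intro finite_UN_I) (simp_all add: finite_walk_edges)
  moreover have "\<forall>(b, b') \<in> F. E b b'" using FE by blast
  ultimately show ?thesis by (intro exI[of _ F]) simp
qed

end

lemma le_of_linear_bound:
  fixes A B K :: real
  assumes "\<And>n::nat. real n * A \<le> real n * B + K"
  shows "A \<le> B"
proof (rule ccontr)
  assume "\<not> A \<le> B"
  then have pos: "0 < A - B" by simp
  obtain n :: nat where "K / (A - B) < real n" using reals_Archimedean2 by blast
  then have "K < real n * (A - B)" using pos by (simp add: pos_divide_less_eq mult.commute)
  then show False using assms[of n] by (simp add: algebra_simps)
qed

context tree_action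
begin

lemma displacement_change_base:
  assumes "g \<in> carrier G" "u \<in> V" "v \<in> V"
  shows "d u (\<phi> g u) \<le> d v (\<phi> g v) + 2 * d u v"
proof -
  have "d u (\<phi> g u) \<le> d u v + d v (\<phi> g u)"
    using dist_triangle assms act_in_V by blast
  also have "d v (\<phi> g u) \<le> d v (\<phi> g v) + d (\<phi> g v) (\<phi> g u)"
    using dist_triangle assms act_in_V by blast
  also have "d (\<phi> g v) (\<phi> g u) = d u v"
    using dist_act assms dist_commute by simp
  finally show ?thesis by simp
qed

end

locale tree_action_pair =
  T1: tree_action G V1 E1 len1 \<phi>1 + T2: tree_action G V2 E2 len2 \<phi>2
  for G :: "('g, 'b) monoid_scheme"
    and V1 :: "'v set" and E1 len1 \<phi>1 and V2 :: "'w set" and E2 len2 \<phi>2 +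
  assumes stabilizer_elliptic: "\<And>c. c \<in> V1 \<Longrightarrow> elliptic V2 E2 \<phi>2 (T1.stabilizer {c})"
begin

text \<open>If \<open>z b = z' c\<close>, then \<open>z\<inverse> z'\<close> lies in the coset \<open>g0 Stab(c)\<close> of a fixed \<open>g0\<close> with
  \<open>g0 c = b\<close>, on which the displacement of \<open>f c\<close> is controlled.\<close>

lemma dist_translates_bounded:
  assumes b: "b \<in> V1" and c: "c \<in> V1" and fb: "f b \<in> V2" and fc: "f c \<in> V2"
    and stab: "\<And>s. s \<in> T1.stabilizer {c} \<Longrightarrow> T2.d (f c) (\<phi>2 s (f c)) \<le> L"
  shows "\<exists>D. \<forall>z\<in>carrier G. \<forall>z'\<in>carrier G. \<phi>1 z b = \<phi>1 z' c \<longrightarrow>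
           T2.d (\<phi>2 z (f b)) (\<phi>2 z' (f c)) \<le> D"
proof (cases "\<exists>g0\<in>carrier G. \<phi>1 g0 c = b")
  case False
  have "\<phi>1 (inv\<^bsub>G\<^esub> z \<otimes>\<^bsub>G\<^esub> z') c = b" if "z \<in> carrier G" "z' \<in> carrier G" "\<phi>1 z b = \<phi>1 z' c" for z z'
    using that T1.act_mult T1.act_inv_act b c by (metis T1.inv_closed)
  then show ?thesis using False by (metis T1.inv_closed T1.m_closed)
next
  case True
  then obtain g0 where g0: "g0 \<in> carrier G" "\<phi>1 g0 c = b" by blast
  have "T2.d (\<phi>2 z (f b)) (\<phi>2 z' (f c)) \<le> T2.d (f b) (\<phi>2 g0 (f c)) + L"
    if z: "z \<in> carrier G" "z' \<in> carrier G" "\<phi>1 z b = \<phi>1 z' c" for z z'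
  proof -
    define s where "s = inv\<^bsub>G\<^esub> g0 \<otimes>\<^bsub>G\<^esub> inv\<^bsub>G\<^esub> z \<otimes>\<^bsub>G\<^esub> z'"
    have s_carrier: "s \<in> carrier G" using g0 z unfolding s_def by simp
    have "\<phi>1 s c = \<phi>1 (inv\<^bsub>G\<^esub> g0) (\<phi>1 (inv\<^bsub>G\<^esub> z) (\<phi>1 z b))"
      using g0 z c unfolding s_def by (simp add: T1.act_mult T1.act_in_V)
    also have "\<dots> = c" using T1.act_inv_act[OF z(1) b] T1.act_inv_act[OF g0(1) c] g0(2) by simp
    finally have "s \<in> T1.stabilizer {c}" using s_carrier unfolding T1.stabilizer_def by simp
    have z': "z' = z \<otimes>\<^bsub>G\<^esub> (g0 \<otimes>\<^bsub>G\<^esub> s)"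
      using g0 z unfolding s_def by (simp add: T1.m_assoc[symmetric])
    have "T2.d (\<phi>2 z (f b)) (\<phi>2 z' (f c)) = T2.d (f b) (\<phi>2 g0 (\<phi>2 s (f c)))"
      unfolding z' using g0 z s_carrier fb fc by (simp add: T2.act_mult T2.act_in_V T2.dist_act)
    also have "\<dots> \<le> T2.d (f b) (\<phi>2 g0 (f c)) + T2.d (\<phi>2 g0 (f c)) (\<phi>2 g0 (\<phi>2 s (f c)))"
      using T2.dist_triangle fb fc g0 s_carrier T2.act_in_V by simp
    also have "T2.d (\<phi>2 g0 (f c)) (\<phi>2 g0 (\<phi>2 s (f c))) \<le> L"
      using stab[OF \<open>s \<in> T1.stabilizer {c}\<close>] T2.dist_act g0 s_carrier fc T2.act_in_V by simp
    finally show ?thesis by simp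
  qed
  then show ?thesis by blast
qed

lemma edges_in_orbit_dist_bound:
  assumes F: "F \<subseteq> W \<times> W" and W: "W \<subseteq> V1" and f: "\<And>c. c \<in> W \<Longrightarrow> f c \<in> V2"
    and translates: "\<And>b c z z'. b \<in> W \<Longrightarrow> c \<in> W \<Longrightarrow> z \<in> carrier G \<Longrightarrow> z' \<in> carrier G \<Longrightarrow>
        \<phi>1 z b = \<phi>1 z' c \<Longrightarrow> T2.d (\<phi>2 z (f b)) (\<phi>2 z' (f c)) \<le> D"
    and edges: "\<And>b b'. (b, b') \<in> F \<Longrightarrow> T2.d (f b) (f b') \<le> D"
  shows "q \<noteq> [] \<Longrightarrow> T1.edges_in_orbit F q \<Longrightarrow> z \<in> carrier G \<Longrightarrow> z' \<in> carrier G \<Longrightarrow>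
     b \<in> W \<Longrightarrow> b' \<in> W \<Longrightarrow> hd q = \<phi>1 z b \<Longrightarrow> last q = \<phi>1 z' b' \<Longrightarrow>
     T2.d (\<phi>2 z (f b)) (\<phi>2 z' (f b')) \<le> D * (2 * real (length q - 1) + 1)"
proof (induction q arbitrary: z b rule: walk_edges.induct)
  case (1 x x' rest)
  obtain z1 c c' where z1: "z1 \<in> carrier G" "(c, c') \<in> F" "x = \<phi>1 z1 c" "x' = \<phi>1 z1 c'"
    using "1.prems"(2) unfolding T1.edges_in_orbit_def by auto
  have cc: "c \<in> W" "c' \<in> W" using z1(2) F by auto
  have "T1.edges_in_orbit F (x' # rest)" using "1.prems"(2) unfolding T1.edges_in_orbit_def by auto
  then have IH: "T2.d (\<phi>2 z1 (f c')) (\<phi>2 z' (f b')) \<le> D * (2 * real (length rest) + 1)"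
    using "1.IH"[OF _ _ z1(1) "1.prems"(4) cc(2) "1.prems"(6)] "1.prems"(8) z1(4) by simp
  have V2: "\<phi>2 z (f b) \<in> V2" "\<phi>2 z1 (f c) \<in> V2" "\<phi>2 z1 (f c') \<in> V2" "\<phi>2 z' (f b') \<in> V2"
    using T2.act_in_V f cc z1(1) "1.prems" by auto
  have "T2.d (\<phi>2 z (f b)) (\<phi>2 z' (f b')) \<le>
      T2.d (\<phi>2 z (f b)) (\<phi>2 z1 (f c)) + T2.d (\<phi>2 z1 (f c)) (\<phi>2 z1 (f c')) +
      T2.d (\<phi>2 z1 (f c')) (\<phi>2 z' (f b'))"
    using T2.dist_triangle[OF V2(1,2,4)] T2.dist_triangle[OF V2(2,3,4)] by simp
  also have "T2.d (\<phi>2 z (f b)) (\<phi>2 z1 (f c)) \<le> D"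
    using translates "1.prems"(3,5,7) cc(1) z1(1,3) by simp
  also have "T2.d (\<phi>2 z1 (f c)) (\<phi>2 z1 (f c')) \<le> D"
    using T2.dist_act z1(1) f cc edges[OF z1(2)] by simp
  finally show ?case using IH by (simp add: algebra_simps)
next
  case ("2_2" x)
  then show ?case using translates by simp
qed simp

end

context tree_action_pair
begin

lemma equivariant_coarse_map:
  assumes W: "finite W" "W \<subseteq> V1"
  shows "\<exists>f D. (\<forall>c\<in>W. f c \<in> V2) \<and> (\<forall>b\<in>W. \<forall>c\<in>W. \<forall>z\<in>carrier G. \<forall>z'\<in>carrier G.
           \<phi>1 z b = \<phi>1 z' c \<longrightarrow> T2.d (\<phi>2 z (f b)) (\<phi>2 z' (f c)) \<le> D)"
proof -
  have "\<exists>L. \<forall>c\<in>W. \<exists>w\<in>V2. \<forall>s\<in>T1.stabilizer {c}. T2.d w (\<phi>2 s w) \<le> L"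
  proof (rule ex_uniform_bound_finite[OF W(1)])
    fix c assume "c \<in> W"
    then show "\<exists>L. \<exists>w\<in>V2. \<forall>s\<in>T1.stabilizer {c}. T2.d w (\<phi>2 s w) \<le> L"
      using T2.elliptic_displacement_bounded[OF stabilizer_elliptic] W(2) by blast
  qed (meson order_trans)
  then obtain L where "\<forall>c\<in>W. \<exists>w. w \<in> V2 \<and> (\<forall>s\<in>T1.stabilizer {c}. T2.d w (\<phi>2 s w) \<le> L)"
    by blast
  from bchoice[OF this] obtain f
    where f: "\<forall>c\<in>W. f c \<in> V2 \<and> (\<forall>s\<in>T1.stabilizer {c}. T2.d (f c) (\<phi>2 s (f c)) \<le> L)"
    by blast
  have "\<exists>D. \<forall>x\<in>W \<times> W. \<forall>z\<in>carrier G. \<forall>z'\<in>carrier G.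
          \<phi>1 z (fst x) = \<phi>1 z' (snd x) \<longrightarrow> T2.d (\<phi>2 z (f (fst x))) (\<phi>2 z' (f (snd x))) \<le> D"
  proof (rule ex_uniform_bound_finite)
    fix x assume x: "x \<in> W \<times> W"
    then have "fst x \<in> V1" "snd x \<in> V1" "f (fst x) \<in> V2" "f (snd x) \<in> V2"
      and "\<And>s. s \<in> T1.stabilizer {snd x} \<Longrightarrow> T2.d (f (snd x)) (\<phi>2 s (f (snd x))) \<le> L"
      using W(2) f by auto
    then show "\<exists>D. \<forall>z\<in>carrier G. \<forall>z'\<in>carrier G.
          \<phi>1 z (fst x) = \<phi>1 z' (snd x) \<longrightarrow> T2.d (\<phi>2 z (f (fst x))) (\<phi>2 z' (f (snd x))) \<le> D"
      by (rule dist_translates_bounded)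
  qed (use W(1) in \<open>auto intro: order_trans\<close>)
  then obtain D where "\<forall>x\<in>W \<times> W. \<forall>z\<in>carrier G. \<forall>z'\<in>carrier G.
      \<phi>1 z (fst x) = \<phi>1 z' (snd x) \<longrightarrow> T2.d (\<phi>2 z (f (fst x))) (\<phi>2 z' (f (snd x))) \<le> D"
    by blast
  then show ?thesis using f by (intro exI[of _ f] exI[of _ D]) auto
qed

text \<open>A geodesic from \<open>v0\<close> to \<open>y v0\<close> is a chain of translates of finitely many edges, each
  of length at least \<open>l\<close>, and each translate moves the image point by a bounded amount.\<close>

lemma orbit_map_coarse_lipschitz:
  assumes S: "finite_gen_set G S" and v0: "v0 \<in> V1"
  shows "\<exists>w0\<in>V2. \<exists>C>0. \<exists>K. \<forall>y\<in>carrier G. T2.d w0 (\<phi>2 y w0) \<le> C * T1.d v0 (\<phi>1 y v0) + K"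
proof -
  obtain F where F: "finite F" "\<forall>(b, b') \<in> F. E1 b b'"
    and walks: "\<forall>y\<in>carrier G. \<exists>p. is_walk E1 p \<and> hd p = v0 \<and> last p = \<phi>1 y v0 \<and> T1.edges_in_orbit F p"
    using T1.finite_orbit_cover[OF S v0] by blast
  define W where "W = insert v0 (Field F)"
  have W: "finite W" "W \<subseteq> V1" "F \<subseteq> W \<times> W"
    using F v0 T1.edge_in_V unfolding W_def Field_def by (auto simp: finite_Domain finite_Range)
  obtain f D1 where f: "\<forall>c\<in>W. f c \<in> V2"
    and D1: "\<forall>b\<in>W. \<forall>c\<in>W. \<forall>z\<in>carrier G. \<forall>z'\<in>carrier G.
           \<phi>1 z b = \<phi>1 z' c \<longrightarrow> T2.d (\<phi>2 z (f b)) (\<phi>2 z' (f c)) \<le> D1"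
    using equivariant_coarse_map[OF W(1,2)] by blast
  define D where "D = max (max D1 (Max (insert 0 ((\<lambda>(b, b'). T2.d (f b) (f b')) ` F)))) 0"
  have D: "0 \<le> D" "\<And>b b'. (b, b') \<in> F \<Longrightarrow> T2.d (f b) (f b') \<le> D"
    "\<And>b c z z'. b \<in> W \<Longrightarrow> c \<in> W \<Longrightarrow> z \<in> carrier G \<Longrightarrow> z' \<in> carrier G \<Longrightarrow>
        \<phi>1 z b = \<phi>1 z' c \<Longrightarrow> T2.d (\<phi>2 z (f b)) (\<phi>2 z' (f c)) \<le> D"
    unfolding D_def using F(1) D1 by (auto simp: le_max_iff_disj intro!: Max_ge rev_image_eqI)
  define l where "l = Min (insert 1 ((\<lambda>(b, b'). len1 b b') ` F))"
  have l: "0 < l" "\<And>b b'. (b, b') \<in> F \<Longrightarrow> E1 b b' \<and> l \<le> len1 b b'"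
    unfolding l_def using F T1.len_pos by (auto intro: Min_le)
  define C where "C = 2 * D / l + 1"
  have "T2.d (f v0) (\<phi>2 y (f v0)) \<le> C * T1.d v0 (\<phi>1 y v0) + D" if y: "y \<in> carrier G" for y
  proof -
    obtain p where p: "is_walk E1 p" "hd p = v0" "last p = \<phi>1 y v0" "T1.edges_in_orbit F p"
      using walks y by blast
    obtain q where q: "is_walk E1 q" "backtrack_free q" "hd q = v0" "last q = \<phi>1 y v0"
      "T1.edges_in_orbit F q"
      using T1.reduce_walk[OF p(1)] p T1.edges_in_orbit_subwalk[OF p(4)] by metis
    define n where "n = real (length q - 1)"
    have "n * l \<le> T1.d v0 (\<phi>1 y v0)"
      using T1.walk_length_le_dist_if_edges_in_orbit[OF q(1,2,5) l(2)] q(3,4) unfolding n_def by simp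
    then have "2 * D * n \<le> (C - 1) * T1.d v0 (\<phi>1 y v0)"
      using D(1) l(1) unfolding C_def by (simp add: field_simps mult_left_mono)
    moreover have "0 \<le> T1.d v0 (\<phi>1 y v0)" using T1.dist_nonneg v0 T1.act_in_V y by blast
    moreover have "T2.d (\<phi>2 \<one>\<^bsub>G\<^esub> (f v0)) (\<phi>2 y (f v0)) \<le> D * (2 * n + 1)"
      unfolding n_def
      by (rule edges_in_orbit_dist_bound[OF W(3,2) _ D(3,2)])
        (use f q y v0 T1.act_one in \<open>auto simp: W_def\<close>)
    ultimately show ?thesis using f T2.act_one by (simp add: W_def algebra_simps)
  qed
  moreover have "f v0 \<in> V2" "0 < C" using f D(1) l(1) unfolding W_def C_def by (simp_all add: add_nonneg_pos)
  ultimately show ?thesis by blast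
qed

end

context tree_action_pair
begin

text \<open>Along an axis of \<open>h\<close> in the second tree, \<open>h\<^sup>n\<close> moves points linearly in \<open>n\<close>, whereas the
  coarsely Lipschitz orbit map bounds this displacement by the displacement of \<open>h\<^sup>n\<close> in the
  first tree, which is at most \<open>n\<close> times that of \<open>h\<close>.\<close>

lemma axis_displacement_le:
  assumes v0: "v0 \<in> V1" and w0: "w0 \<in> V2"
    and lip: "\<And>y. y \<in> carrier G \<Longrightarrow> T2.d w0 (\<phi>2 y w0) \<le> C * T1.d v0 (\<phi>1 y v0) + K"
    and C: "0 < C" and h: "h \<in> carrier G" and a: "a \<in> V2"
    and axis: "\<And>n. real n * T2.d a (\<phi>2 h a) \<le> T2.d a (\<phi>2 (h [^]\<^bsub>G\<^esub> n) a)"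
    and v: "v \<in> V1"
  shows "T2.d a (\<phi>2 h a) \<le> C * T1.d v (\<phi>1 h v)"
proof (rule le_of_linear_bound)
  fix n :: nat
  let ?g = "h [^]\<^bsub>G\<^esub> n"
  have g: "?g \<in> carrier G" using h by simp
  have "real n * T2.d a (\<phi>2 h a) \<le> T2.d a (\<phi>2 ?g a)" by (rule axis)
  also have "\<dots> \<le> T2.d w0 (\<phi>2 ?g w0) + 2 * T2.d a w0"
    by (rule T2.displacement_change_base[OF g a w0])
  also have "T2.d w0 (\<phi>2 ?g w0) \<le> C * T1.d v0 (\<phi>1 ?g v0) + K" by (rule lip[OF g])
  also have "T1.d v0 (\<phi>1 ?g v0) \<le> T1.d v (\<phi>1 ?g v) + 2 * T1.d v0 v"
    by (rule T1.displacement_change_base[OF g v0 v])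
  also have "T1.d v (\<phi>1 ?g v) \<le> real n * T1.d v (\<phi>1 h v)" by (rule T1.dist_pow_le[OF h v])
  finally show "real n * T2.d a (\<phi>2 h a)
      \<le> real n * (C * T1.d v (\<phi>1 h v)) + (K + 2 * T2.d a w0 + 2 * C * T1.d v0 v)"
    using C by (simp add: algebra_simps)
qed

lemma trans_length_le_linear:
  assumes S: "finite_gen_set G S"
    and elliptic_bounded: "\<And>h. h \<in> carrier G \<Longrightarrow> elliptic V2 E2 \<phi>2 {h} \<Longrightarrow> trans_length V2 E2 len2 \<phi>2 h \<le> M"
  shows "\<exists>C>0. \<forall>h\<in>carrier G.
           trans_length V2 E2 len2 \<phi>2 h \<le> C * trans_length V1 E1 len1 \<phi>1 h + max M 0"
proof -
  obtain v0 where v0: "v0 \<in> V1" using T1.V_nonempty by blast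
  obtain w0 C K where w0: "w0 \<in> V2" and C: "0 < C"
    and lip: "\<And>y. y \<in> carrier G \<Longrightarrow> T2.d w0 (\<phi>2 y w0) \<le> C * T1.d v0 (\<phi>1 y v0) + K"
    using orbit_map_coarse_lipschitz[OF S v0] by blast
  have "trans_length V2 E2 len2 \<phi>2 h \<le> C * trans_length V1 E1 len1 \<phi>1 h + max M 0"
    if h: "h \<in> carrier G" for h
  proof -
    have tl1: "0 \<le> C * trans_length V1 E1 len1 \<phi>1 h" using C T1.trans_length_nonneg[OF h] by simp
    consider "elliptic V2 E2 \<phi>2 {h}"
      | a where "a \<in> V2" "\<And>n. real n * T2.d a (\<phi>2 h a) \<le> T2.d a (\<phi>2 (h [^]\<^bsub>G\<^esub> n) a)"
      using T2.elliptic_or_translation_axis[OF h] by blast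
    then show ?thesis
    proof cases
      case 1
      then show ?thesis using elliptic_bounded[OF h] tl1 by linarith
    next
      case (2 a)
      then have "T2.d a (\<phi>2 h a) / C \<le> trans_length V1 E1 len1 \<phi>1 h"
        using axis_displacement_le[OF v0 w0 lip _ h] C
        by (intro T1.trans_length_greatest) (simp add: divide_le_eq mult.commute)
      then have "T2.d a (\<phi>2 h a) \<le> C * trans_length V1 E1 len1 \<phi>1 h"
        using C by (simp add: divide_le_eq mult.commute)
      then show ?thesis using T2.trans_length_le[OF h 2(1)] by linarith
    qed
  qed
  then show ?thesis using C by blast
qed

end

section \<open>Polynomial growth\<close>

lemma tree_action_pair_if_elliptic_subgroups:
  assumes "group G" "metric_G_tree G V1 E1 len1 \<phi>1" "metric_G_tree G V2 E2 len2 \<phi>2"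
    and elliptic12: "\<And>K. subgroup K G \<Longrightarrow> elliptic V1 E1 \<phi>1 K \<Longrightarrow> elliptic V2 E2 \<phi>2 K"
  shows "tree_action_pair G V1 E1 len1 \<phi>1 V2 E2 len2 \<phi>2"
proof -
  interpret T1: tree_action G V1 E1 len1 \<phi>1 by (simp add: tree_action_def assms)
  interpret T2: tree_action G V2 E2 len2 \<phi>2 by (simp add: tree_action_def assms)
  have "elliptic V2 E2 \<phi>2 (T1.stabilizer {c})" if c: "c \<in> V1" for c
  proof (rule elliptic12)
    show "subgroup (T1.stabilizer {c}) G" using c by (simp add: T1.stabilizer_subgroup)
    show "elliptic V1 E1 \<phi>1 (T1.stabilizer {c})"
      using c unfolding elliptic_def T1.stabilizer_def by auto
  qed
  then show ?thesis by unfold_locales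
qed

lemma trans_length_comparison:
  assumes "group G" and S: "finite_gen_set G S" and Hs: "peripheral_structure G Hs"
    and "metric_G_tree G V1 E1 len1 \<phi>1" "metric_G_tree G V2 E2 len2 \<phi>2"
    and ell1: "\<forall>K. subgroup K G \<longrightarrow> (elliptic V1 E1 \<phi>1 K \<longleftrightarrow>
            (\<exists>i<length Hs. \<exists>x\<in>carrier G. K \<subseteq> conjugate G x (Hs ! i)))"
    and ell2: "\<forall>K. subgroup K G \<longrightarrow> (elliptic V2 E2 \<phi>2 K \<longleftrightarrow>
            (\<exists>i<length Hs. \<exists>x\<in>carrier G. K \<subseteq> conjugate G x (Hs ! i)))"
  shows "\<exists>C>0. \<exists>M. \<forall>h\<in>carrier G.
           trans_length V2 E2 len2 \<phi>2 h \<le> C * trans_length V1 E1 len1 \<phi>1 h + M"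
proof -
  have "elliptic V2 E2 \<phi>2 K" if "subgroup K G" "elliptic V1 E1 \<phi>1 K" for K
    using ell1 ell2 that by blast
  then interpret tree_action_pair G V1 E1 len1 \<phi>1 V2 E2 len2 \<phi>2
    using tree_action_pair_if_elliptic_subgroups assms(1,4,5) by blast
  have "elliptic V2 E2 \<phi>2 (Hs ! i)" if i: "i < length Hs" for i
  proof -
    have sub: "subgroup (Hs ! i) G" using Hs i unfolding peripheral_structure_def by simp
    have "Hs ! i \<subseteq> conjugate G \<one>\<^bsub>G\<^esub> (Hs ! i)"
    proof
      fix h assume h: "h \<in> Hs ! i"
      then have "h = \<one>\<^bsub>G\<^esub> \<otimes>\<^bsub>G\<^esub> h \<otimes>\<^bsub>G\<^esub> inv\<^bsub>G\<^esub> \<one>\<^bsub>G\<^esub>" using subgroup.subset[OF sub] by auto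
      then show "h \<in> conjugate G \<one>\<^bsub>G\<^esub> (Hs ! i)" unfolding conjugate_def using h by blast
    qed
    then show ?thesis using ell2 sub i monoid.one_closed[OF group.is_monoid[OF assms(1)]] by blast
  qed
  moreover have "\<exists>i<length Hs. \<exists>x\<in>carrier G. K \<subseteq> conjugate G x (Hs ! i)"
    if "subgroup K G" "elliptic V2 E2 \<phi>2 K" for K
    using ell2 that by blast
  ultimately obtain M
    where "\<And>h. h \<in> carrier G \<Longrightarrow> elliptic V2 E2 \<phi>2 {h} \<Longrightarrow> trans_length V2 E2 len2 \<phi>2 h \<le> M"
    using T2.trans_length_elliptic_bounded[OF Hs] by blast
  then obtain C where "0 < C" "\<forall>h\<in>carrier G.
      trans_length V2 E2 len2 \<phi>2 h \<le> C * trans_length V1 E1 len1 \<phi>1 h + max M 0"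
    using trans_length_le_linear[OF S] by blast
  then show ?thesis by blast
qed

lemma polynomial_growth_transfer:
  assumes growth: "polynomial_growth V E len \<phi> \<alpha> g"
    and nonneg: "\<And>n. 0 \<le> trans_length V E len \<phi> ((\<alpha> ^^ n) g)"
    and bound: "\<And>n. trans_length V' E' len' \<phi>' ((\<alpha> ^^ n) g) \<le> C * trans_length V E len \<phi> ((\<alpha> ^^ n) g) + M"
    and C: "0 \<le> C"
  shows "polynomial_growth V' E' len' \<phi>' \<alpha> g"
proof -
  obtain P :: "int poly" where P: "\<And>n. trans_length V E len \<phi> ((\<alpha> ^^ n) g) \<le> of_int (poly P (int n))"
    using growth unfolding polynomial_growth_def by blast
  have "trans_length V' E' len' \<phi>' ((\<alpha> ^^ n) g) \<le> of_int (poly (smult \<lceil>C\<rceil> P + [:\<lceil>M\<rceil>:]) (int n))"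
    for n
  proof -
    have "trans_length V' E' len' \<phi>' ((\<alpha> ^^ n) g) \<le> C * of_int (poly P (int n)) + M"
      using bound[of n] mult_left_mono[OF P C] by (meson add_right_mono order_trans)
    also have "\<dots> \<le> of_int \<lceil>C\<rceil> * of_int (poly P (int n)) + of_int \<lceil>M\<rceil>"
      using nonneg[of n] P[of n] by (intro add_mono mult_right_mono) auto
    finally show ?thesis by simp
  qed
  then show ?thesis unfolding polynomial_growth_def by blast
qed

theorem lemma3p1:
  fixes G :: "('g, 'b) monoid_scheme"
    and Hs :: "'g set list"
    and V1 :: "'v set" and E1 :: "'v \<Rightarrow> 'v \<Rightarrow> bool" and len1 :: "'v \<Rightarrow> 'v \<Rightarrow> real"
    and \<phi>1 :: "'g \<Rightarrow> 'v \<Rightarrow> 'v"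
    and V2 :: "'w set" and E2 :: "'w \<Rightarrow> 'w \<Rightarrow> bool" and len2 :: "'w \<Rightarrow> 'w \<Rightarrow> real"
    and \<phi>2 :: "'g \<Rightarrow> 'w \<Rightarrow> 'w"
    and \<alpha> :: "'g \<Rightarrow> 'g" and g :: 'g
  assumes "hyperbolic_group G" and "torsion_free G"
    and "peripheral_structure G Hs"
    and "metric_G_tree G V1 E1 len1 \<phi>1" and "metric_G_tree G V2 E2 len2 \<phi>2"
    and "\<forall>K. subgroup K G \<longrightarrow> (elliptic V1 E1 \<phi>1 K \<longleftrightarrow>
            (\<exists>i<length Hs. \<exists>x\<in>carrier G. K \<subseteq> conjugate G x (Hs ! i)))"
    and "\<forall>K. subgroup K G \<longrightarrow> (elliptic V2 E2 \<phi>2 K \<longleftrightarrow>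
            (\<exists>i<length Hs. \<exists>x\<in>carrier G. K \<subseteq> conjugate G x (Hs ! i)))"
    and "\<alpha> \<in> iso G G" and "preserves_peripheral G Hs \<alpha>"
    and "g \<in> carrier G"
  shows "polynomial_growth V1 E1 len1 \<phi>1 \<alpha> g \<longleftrightarrow> polynomial_growth V2 E2 len2 \<phi>2 \<alpha> g"
proof -
  obtain S where group: "group G" and S: "finite_gen_set G S"
    using assms(1) unfolding hyperbolic_group_def by blast
  interpret T1: tree_action G V1 E1 len1 \<phi>1 by (simp add: tree_action_def group assms(4))
  interpret T2: tree_action G V2 E2 len2 \<phi>2 by (simp add: tree_action_def group assms(5))
  have orbit: "(\<alpha> ^^ n) g \<in> carrier G" for n
    using assms(8,10) unfolding iso_def hom_def by (induction n) auto
  obtain C12 M12 where "0 < C12" "\<forall>h\<in>carrier G.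
      trans_length V2 E2 len2 \<phi>2 h \<le> C12 * trans_length V1 E1 len1 \<phi>1 h + M12"
    using trans_length_comparison[OF group S assms(3-7)] by blast
  moreover obtain C21 M21 where "0 < C21" "\<forall>h\<in>carrier G.
      trans_length V1 E1 len1 \<phi>1 h \<le> C21 * trans_length V2 E2 len2 \<phi>2 h + M21"
    using trans_length_comparison[OF group S assms(3,5,4,7,6)] by blast
  ultimately show ?thesis
    using polynomial_growth_transfer[of V1 E1 len1 \<phi>1 \<alpha> g V2 E2 len2 \<phi>2]
      polynomial_growth_transfer[of V2 E2 len2 \<phi>2 \<alpha> g V1 E1 len1 \<phi>1]
      T1.trans_length_nonneg T2.trans_length_nonneg orbit
    by (meson less_imp_le)
qed

end
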